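(* Under assumptions (AR-B1)–(AR-B3), for each $\boldsymbol\theta\in\boldsymbol\Theta$ the relative asymptotic equipartition property holds: $P$-almost surely, $$\lim_{n\to\infty}\frac1n\log R_n(\boldsymbol\theta)=-h(\boldsymbol\theta),$$ where $h$ is the Kullback–Leibler divergence rate. Moreover the convergence is uniform over $\boldsymbol\theta$ in any compact subset of $\boldsymbol\Theta$.
   Context: True model $P$: $x_t=\rho_0x_{t-1}+\mathbf z_t'\boldsymbol\beta_0+\epsilon_t$ for $t=1,2,\ldots$, with $x_0=0$, $|\rho_0|<1$, $\epsilon_t$ i.i.d. $N(0,\sigma_0^2)$, where $\mathbf z_t\in\mathbb R^{m+1}$ are given (non-random) covariate vectors. Postulated model: the same equation with unknown $\boldsymbol\theta=(\rho,\boldsymbol\beta,\sigma)\in\boldsymbol\Theta=\mathbb R\times\mathbb R^{m+1}\times(0,\infty)$ in place of $\boldsymbol\theta_0=(\rho_0,\boldsymbol\beta_0,\sigma_0)$, i.e. $f_{\boldsymbol\theta}(\mathbf X_n)=\prod_{t=1}^n(2\pi\sigma^2)^{-1/2}\exp\{-(x_t-\rho x_{t-1}-\mathbf z_t'\boldsymbol\beta)^2/(2\sigma^2)\}$, $p=f_{\boldsymbol\theta_0}$, $R_n(\boldsymbol\theta)=f_{\boldsymbol\theta}(\mathbf X_n)/p(\mathbf X_n)$, and $h(\boldsymbol\theta)=\lim_n n^{-1}E_P[-\log R_n(\boldsymbol\theta)]$. Assumptions: (AR-B1) as $n\to\infty$, $n^{-1}\sum_{t=1}^n\mathbf z_t\to\mathbf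 0$, $n^{-1}\sum_{t=1}^n\mathbf z_{t+k}\mathbf z_t'\to\mathbf 0$ for every $k\ge1$, and $n^{-1}\sum_{t=1}^n\mathbf z_t\mathbf z_t'\to\Sigma_z$; (AR-B2) $\sup_{t\ge1}|\mathbf z_t'\boldsymbol\beta_0|<C$ for some $C>0$; (AR-B3) $\boldsymbol\theta_0$ is an interior point of $\boldsymbol\Theta$. *)

theory Defs
  imports "HOL-Probability.Probability"
begin

text \<open>Parameter space Theta = R x R^(m+1) x (0,inf); the index type 'm has m+1 elements.\<close>
definition Theta :: "(real \<times> (real^'m) \<times> real) set" where
  "Theta = UNIV \<times> UNIV \<times> {0<..}"

primrec ARproc :: "real \<Rightarrow> real^'m \<Rightarrow> (nat \<Rightarrow> real^'m) \<Rightarrow> (nat \<Rightarrow> real) \<Rightarrow> nat \<Rightarrow> real" where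
  "ARproc \<rho> \<beta> z e 0 = 0"
| "ARproc \<rho> \<beta> z e (Suc t) = \<rho> * ARproc \<rho> \<beta> z e t + z (Suc t) \<bullet> \<beta> + e (Suc t)"

text \<open>Postulated joint density f_theta(X_n) of x_1..x_n (conditionally on x_0 = 0).\<close>
definition fdens :: "(nat \<Rightarrow> real^'m) \<Rightarrow> real \<times> (real^'m) \<times> real \<Rightarrow> nat \<Rightarrow> (nat \<Rightarrow> real) \<Rightarrow> real" where
  "fdens z \<theta> n xs = (case \<theta> of (\<rho>, \<beta>, \<sigma>) \<Rightarrow>
     (\<Prod>t\<in>{1..n}. (2 * pi * \<sigma>\<^sup>2) powr (-1/2) *
        exp (- (xs t - \<rho> * xs (t - 1) - z t \<bullet> \<beta>)\<^sup>2 / (2 * \<sigma>\<^sup>2))))"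

definition Rn :: "(nat \<Rightarrow> real^'m) \<Rightarrow> real \<times> (real^'m) \<times> real \<Rightarrow> real \<times> (real^'m) \<times> real
                  \<Rightarrow> nat \<Rightarrow> (nat \<Rightarrow> real) \<Rightarrow> real" where
  "Rn z \<theta>0 \<theta> n xs = fdens z \<theta> n xs / fdens z \<theta>0 n xs"

definition KLrate :: "'a measure \<Rightarrow> (nat \<Rightarrow> 'a \<Rightarrow> real) \<Rightarrow> (nat \<Rightarrow> real^'m)
                      \<Rightarrow> real \<times> (real^'m) \<times> real \<Rightarrow> real \<times> (real^'m) \<times> real \<Rightarrow> real" where
  "KLrate M X z \<theta>0 \<theta> =
     lim (\<lambda>n. (\<integral>\<omega>. - ln (Rn z \<theta>0 \<theta> n (\<lambda>t. X t \<omega>)) \<partial>M) / real n)"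

end

theory Submission
  imports Defs
begin

text \<open>Under the true parameter the path splits as x_t = m_t + u_t, where m is the response of the
  stable AR(1) filter to the drift z_t'\<beta>0 and u is the filtered Gaussian noise.  For
  \<theta> = (\<rho>, \<beta>, s) the log-likelihood ratio ln R_n(\<theta>) is n times a constant in s, minus the
  residual sum of squares \<Sum> (x_t - \<rho> x_(t-1) - z_t'\<beta>)^2 / (2 s^2), plus \<Sum> \<epsilon>_t^2 / (2 \<sigma>0^2).
  It is thus a quadratic polynomial in (\<rho>, \<beta>) whose coefficients are finitely many sample
  moments of \<epsilon>, x and z.  The deterministic moments converge by (AR-B1) and (AR-B2); the random
  ones converge almost surely by an L2 strong law for sums with geometrically decaying
  covariances, proved by Borel--Cantelli along the squares.  The expected moments have the same
  limits, which identifies the limit as the divergence rate h.  As the error is the error of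
  these finitely many moments, weighted by polynomials in the parameters and by 1/s^2, the
  convergence is uniform on compact subsets of \<Theta>.\<close>

section \<open>Averages along stable linear recursions\<close>

lemma LIMSEQ_cong_pos:
  fixes f g :: "nat \<Rightarrow> real"
  assumes "f \<longlonglongrightarrow> l" "\<And>n. n > 0 \<Longrightarrow> f n = g n"
  shows "g \<longlonglongrightarrow> l"
proof -
  have "eventually (\<lambda>n. f n = g n) sequentially"
    using eventually_gt_at_top[of 0] by eventually_elim (rule assms(2))
  thus ?thesis using assms(1) by (rule Lim_transform_eventually[rotated])
qed

lemma avg_tendsto_0_of_contraction:
  fixes e f :: "nat \<Rightarrow> real" and l :: real
  assumes rec: "\<And>n. e (Suc n) = l * e n + f n" and l: "\<bar>l\<bar> < 1"
    and f: "(\<lambda>n. f n / real n) \<longlonglongrightarrow> 0"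
  shows "(\<lambda>n. e n / real n) \<longlonglongrightarrow> 0"
proof (rule LIMSEQ_I)
  fix r :: real assume r: "0 < r"
  define q where "q = \<bar>l\<bar>"
  have q: "0 \<le> q" "q < 1" using l by (auto simp: q_def)
  define eps where "eps = r / 2"
  have eps: "eps > 0" using r by (simp add: eps_def)
  have "eventually (\<lambda>n. norm (f n / real n) < eps * (1 - q)) sequentially"
    using f eps q by (intro order_tendstoD(2)[of _ 0] tendsto_norm_zero) auto
  then obtain N where N: "\<And>n. n \<ge> N \<Longrightarrow> \<bar>f n / real n\<bar> < eps * (1 - q)"
    by (auto simp: eventually_sequentially)
  define N1 where "N1 = Suc N"
  have fb: "\<bar>f n\<bar> \<le> eps * (1 - q) * real n" if "n \<ge> N1" for n
  proof -
    have "n > 0" using that by (simp add: N1_def)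
    have "\<bar>f n\<bar> / real n < eps * (1 - q)" using N[of n] that by (simp add: N1_def abs_divide)
    thus ?thesis using \<open>n > 0\<close> by (simp add: divide_less_eq less_imp_le)
  qed
  have bound: "\<bar>e n\<bar> \<le> \<bar>e N1\<bar> + eps * real n" if "n \<ge> N1" for n
    using that
  proof (induction n rule: dec_induct)
    case base thus ?case using eps by simp
  next
    case (step n)
    have "\<bar>e (Suc n)\<bar> \<le> q * \<bar>e n\<bar> + \<bar>f n\<bar>"
      unfolding rec q_def by (metis abs_mult abs_triangle_ineq)
    also have "\<dots> \<le> q * (\<bar>e N1\<bar> + eps * real n) + eps * (1 - q) * real n"
      using step fb[of n] q by (intro add_mono mult_left_mono) auto
    also have "\<dots> = q * \<bar>e N1\<bar> + eps * real n" by (simp add: algebra_simps)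
    also have "\<dots> \<le> \<bar>e N1\<bar> + eps * real (Suc n)"
      using q eps by (intro add_mono) (auto intro: mult_left_le_one_le)
    finally show ?case .
  qed
  have "eventually (\<lambda>n. \<bar>e N1\<bar> / real n < eps) sequentially"
  proof -
    have "(\<lambda>n. \<bar>e N1\<bar> / real n) \<longlonglongrightarrow> 0"
      by (rule lim_const_over_n)
    thus ?thesis using eps by (auto dest: order_tendstoD(2))
  qed
  then obtain N2 where N2: "\<And>n. n \<ge> N2 \<Longrightarrow> \<bar>e N1\<bar> / real n < eps"
    by (auto simp: eventually_sequentially)
  show "\<exists>no. \<forall>n\<ge>no. norm (e n / real n - 0) < r"
  proof (intro exI allI impI)
    fix n assume n: "n \<ge> max N1 (max N2 1)"
    have np: "real n > 0" using n by auto
    have "\<bar>e n\<bar> / real n \<le> (\<bar>e N1\<bar> + eps * real n) / real n"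
      using bound[of n] n np by (intro divide_right_mono) auto
    also have "\<dots> = \<bar>e N1\<bar> / real n + eps" using np by (simp add: field_simps)
    also have "\<dots> < eps + eps" using N2[of n] n by simp
    finally show "norm (e n / real n - 0) < r" by (simp add: eps_def abs_divide)
  qed
qed

lemma avg_tendsto_of_contraction:
  fixes c d :: "nat \<Rightarrow> real" and l L :: real
  assumes rec: "\<And>n. c (Suc n) = l * c n + d n" and l: "\<bar>l\<bar> < 1"
    and d: "(\<lambda>n. d n / real n) \<longlonglongrightarrow> L"
  shows "(\<lambda>n. c n / real n) \<longlonglongrightarrow> L / (1 - l)"
proof -
  define L' where "L' = L / (1 - l)"
  have l1: "1 - l \<noteq> 0" using l by auto
  define e where "e n = c n - real n * L'" for n
  define f where "f n = d n - real n * L - L'" for n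
  have LL: "L = L' * (1 - l)" using l1 by (simp add: L'_def)
  have "e (Suc n) = l * e n + f n" for n
    unfolding e_def f_def rec LL by (simp add: algebra_simps)
  moreover have "(\<lambda>n. f n / real n) \<longlonglongrightarrow> 0"
  proof -
    have "(\<lambda>n. d n / real n - L - L' / real n) \<longlonglongrightarrow> L - L - 0"
      by (intro tendsto_diff d tendsto_const lim_const_over_n)
    moreover have "eventually (\<lambda>n. d n / real n - L - L' / real n = f n / real n) sequentially"
      using eventually_gt_at_top[of 0] by eventually_elim (simp add: f_def field_simps)
    ultimately show ?thesis by (simp add: tendsto_cong)
  qed
  ultimately have "(\<lambda>n. e n / real n) \<longlonglongrightarrow> 0" using l by (intro avg_tendsto_0_of_contraction[of e l f]) auto
  hence "(\<lambda>n. e n / real n + L') \<longlonglongrightarrow> 0 + L'" by (intro tendsto_add tendsto_const)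
  moreover have "eventually (\<lambda>n. e n / real n + L' = c n / real n) sequentially"
    using eventually_gt_at_top[of 0] by eventually_elim (simp add: e_def field_simps)
  ultimately show ?thesis by (simp add: tendsto_cong L'_def)
qed

primrec ar_filter :: "real \<Rightarrow> (nat \<Rightarrow> real) \<Rightarrow> nat \<Rightarrow> real" where
  "ar_filter r c 0 = 0"
| "ar_filter r c (Suc t) = r * ar_filter r c t + c (Suc t)"

lemma ar_filter_eq_sum: "ar_filter r c t = (\<Sum>k<t. r ^ k * c (t - k))"
proof (induction t)
  case (Suc t)
  have "ar_filter r c (Suc t) = (\<Sum>k<t. r ^ Suc k * c (Suc t - Suc k)) + r ^ 0 * c (Suc t - 0)"
    by (simp add: Suc sum_distrib_left mult.assoc)
  also have "\<dots> = (\<Sum>k<Suc t. r ^ k * c (Suc t - k))"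
    by (subst sum.lessThan_Suc_shift) simp
  finally show ?case .
qed simp

lemma abs_ar_filter_le:
  assumes c: "\<And>s. s \<ge> 1 \<Longrightarrow> \<bar>c s\<bar> \<le> C" and r: "\<bar>r\<bar> < 1"
  shows "\<bar>ar_filter r c t\<bar> \<le> C / (1 - \<bar>r\<bar>)"
proof (induction t)
  case 0
  have "0 \<le> C" using c[of 1] by simp
  thus ?case using r by simp
next
  case (Suc t)
  have "\<bar>ar_filter r c (Suc t)\<bar> \<le> \<bar>r\<bar> * \<bar>ar_filter r c t\<bar> + \<bar>c (Suc t)\<bar>"
    by (simp add: abs_mult[symmetric] abs_triangle_ineq)
  also have "\<dots> \<le> \<bar>r\<bar> * (C / (1 - \<bar>r\<bar>)) + C"
    using Suc c[of "Suc t"] by (intro add_mono mult_left_mono) auto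
  also have "\<dots> = C / (1 - \<bar>r\<bar>)" using r by (simp add: field_simps)
  finally show ?case .
qed

lemma sum_ar_filter_sq_Suc:
  "(\<Sum>t<Suc n. (ar_filter r c t)\<^sup>2) = r\<^sup>2 * (\<Sum>t<n. (ar_filter r c t)\<^sup>2)
      + 2 * r * (\<Sum>t<n. ar_filter r c t * c (Suc t)) + (\<Sum>t<n. (c (Suc t))\<^sup>2)"
proof -
  have "(\<Sum>t<Suc n. (ar_filter r c t)\<^sup>2) = (\<Sum>t<n. (ar_filter r c (Suc t))\<^sup>2)"
    by (subst sum.lessThan_Suc_shift) simp
  also have "\<dots> = (\<Sum>t<n. r\<^sup>2 * (ar_filter r c t)\<^sup>2 + 2 * r * (ar_filter r c t * c (Suc t)) + (c (Suc t))\<^sup>2)"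
    by (intro sum.cong) (simp_all add: power2_eq_square algebra_simps)
  also have "\<dots> = r\<^sup>2 * (\<Sum>t<n. (ar_filter r c t)\<^sup>2)
      + 2 * r * (\<Sum>t<n. ar_filter r c t * c (Suc t)) + (\<Sum>t<n. (c (Suc t))\<^sup>2)"
    by (simp add: sum.distrib sum_distrib_left)
  finally show ?thesis .
qed

lemma avg_ar_filter_sq_tendsto:
  fixes c :: "nat \<Rightarrow> real"
  assumes r: "\<bar>r\<bar> < 1"
    and sq: "(\<lambda>n. (\<Sum>t<n. (c (Suc t))\<^sup>2) / real n) \<longlonglongrightarrow> L"
    and cross: "(\<lambda>n. (\<Sum>t<n. ar_filter r c t * c (Suc t)) / real n) \<longlonglongrightarrow> 0"
  shows "(\<lambda>n. (\<Sum>t<n. (ar_filter r c t)\<^sup>2) / real n) \<longlonglongrightarrow> L / (1 - r\<^sup>2)"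
proof (rule avg_tendsto_of_contraction)
  show "(\<Sum>t<Suc n. (ar_filter r c t)\<^sup>2) = r\<^sup>2 * (\<Sum>t<n. (ar_filter r c t)\<^sup>2)
      + (2 * r * (\<Sum>t<n. ar_filter r c t * c (Suc t)) + (\<Sum>t<n. (c (Suc t))\<^sup>2))" for n
    using sum_ar_filter_sq_Suc[of r c n] by (simp only: add.assoc)
  show "\<bar>r\<^sup>2\<bar> < 1" using r by (simp add: abs_square_less_1)
  have "(\<lambda>n. 2 * r * ((\<Sum>t<n. ar_filter r c t * c (Suc t)) / real n) + (\<Sum>t<n. (c (Suc t))\<^sup>2) / real n)
      \<longlonglongrightarrow> 2 * r * 0 + L"
    by (intro tendsto_intros cross sq)
  thus "(\<lambda>n. (2 * r * (\<Sum>t<n. ar_filter r c t * c (Suc t)) + (\<Sum>t<n. (c (Suc t))\<^sup>2)) / real n) \<longlonglongrightarrow> L"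
    by (simp add: add_divide_distrib)
qed

lemma sum_lessThan_triangle_swap:
  "(\<Sum>t<n. \<Sum>k<t. f t k) = (\<Sum>k<n. \<Sum>t\<in>{Suc k..<n}. f t k)"
proof (induction n)
  case (Suc n)
  have "(\<Sum>k<Suc n. \<Sum>t\<in>{Suc k..<Suc n}. f t k) = (\<Sum>k<n. \<Sum>t\<in>{Suc k..<Suc n}. f t k)"
    by simp
  also have "\<dots> = (\<Sum>k<n. (\<Sum>t\<in>{Suc k..<n}. f t k) + f n k)"
    by (intro sum.cong refl) (subst sum.atLeastLessThan_Suc, auto)
  finally show ?case by (simp add: Suc sum.distrib)
qed simp

lemma abs_le_half_one_plus_sq: "\<bar>x::real\<bar> \<le> (1 + x\<^sup>2) / 2"
proof -
  have "0 \<le> (\<bar>x\<bar> - 1)\<^sup>2" by simp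
  thus ?thesis by (simp add: power2_eq_square algebra_simps)
qed

lemma avg_lagged_cross_tendsto_0:
  fixes a c :: "nat \<Rightarrow> real"
  assumes H: "(\<lambda>n. (\<Sum>t<n. a (Suc t) * c (Suc t + Suc k)) / real n) \<longlonglongrightarrow> 0"
  shows "(\<lambda>n. (\<Sum>t\<in>{Suc k..<n}. a (t - k) * c (Suc t)) / real n) \<longlonglongrightarrow> 0"
proof (rule LIMSEQ_offset[where k = "Suc k"])
  have shift: "(\<Sum>t\<in>{Suc k..<n + Suc k}. a (t - k) * c (Suc t)) = (\<Sum>t<n. a (Suc t) * c (Suc t + Suc k))" for n
  proof -
    have "(\<Sum>t\<in>{0 + Suc k..<n + Suc k}. a (t - k) * c (Suc t))
        = (\<Sum>t\<in>{0..<n}. a (t + Suc k - k) * c (Suc (t + Suc k)))"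
      by (rule sum.shift_bounds_nat_ivl)
    thus ?thesis by (simp add: lessThan_atLeast0 add.commute)
  qed
  have "(\<lambda>n. real n / real (n + Suc k)) \<longlonglongrightarrow> 1"
  proof -
    have "(\<lambda>n. 1 - real (Suc k) / real (n + Suc k)) \<longlonglongrightarrow> 1 - 0"
      by (intro tendsto_diff tendsto_const LIMSEQ_ignore_initial_segment[OF lim_const_over_n])
    moreover have "1 - real (Suc k) / real (n + Suc k) = real n / real (n + Suc k)" for n
      by (simp add: field_simps)
    ultimately show ?thesis by simp
  qed
  with H have "(\<lambda>n. (\<Sum>t<n. a (Suc t) * c (Suc t + Suc k)) / real n * (real n / real (n + Suc k))) \<longlonglongrightarrow> 0 * 1"
    by (intro tendsto_mult)
  moreover have "(\<Sum>t<n. a (Suc t) * c (Suc t + Suc k)) / real n * (real n / real (n + Suc k))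
      = (\<Sum>t\<in>{Suc k..<n + Suc k}. a (t - k) * c (Suc t)) / real (n + Suc k)" for n
    unfolding shift by (cases "n = 0") simp_all
  ultimately show "(\<lambda>n. (\<Sum>t\<in>{Suc k..<n + Suc k}. a (t - k) * c (Suc t)) / real (n + Suc k)) \<longlonglongrightarrow> 0"
    by simp
qed

lemma abs_sum_lagged_cross_le:
  fixes a c :: "nat \<Rightarrow> real"
  assumes a: "\<And>s. s \<ge> 1 \<Longrightarrow> \<bar>a s\<bar> \<le> C" and c: "(\<Sum>t<n. (c (Suc t))\<^sup>2) \<le> B * real n"
  shows "\<bar>\<Sum>t\<in>{Suc k..<n}. a (t - k) * c (Suc t)\<bar> \<le> C * (1 + B) / 2 * real n"
proof -
  have C: "0 \<le> C" using a[of 1] by simp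
  have "\<bar>\<Sum>t\<in>{Suc k..<n}. a (t - k) * c (Suc t)\<bar> \<le> (\<Sum>t\<in>{Suc k..<n}. C * \<bar>c (Suc t)\<bar>)"
    by (rule order_trans[OF sum_abs], intro sum_mono) (auto simp: abs_mult intro!: mult_right_mono a)
  also have "\<dots> \<le> (\<Sum>t<n. C * \<bar>c (Suc t)\<bar>)"
    by (intro sum_mono2) (auto intro: mult_nonneg_nonneg C)
  also have "\<dots> \<le> (\<Sum>t<n. C * ((1 + (c (Suc t))\<^sup>2) / 2))"
    by (intro sum_mono mult_left_mono abs_le_half_one_plus_sq C)
  also have "\<dots> = C / 2 * (real n + (\<Sum>t<n. (c (Suc t))\<^sup>2))"
    by (simp add: sum_distrib_left sum.distrib algebra_simps sum_divide_distrib[symmetric])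
  also have "\<dots> \<le> C / 2 * (real n + B * real n)"
    using c C by (intro mult_left_mono add_left_mono) auto
  finally show ?thesis by (simp add: algebra_simps)
qed

text \<open>Writing the filter as a geometric sum of lagged cross products reduces the claim to the
  lag-wise hypotheses, with Tannery's theorem interchanging limit and sum over the lags.\<close>
lemma avg_ar_filter_cross_tendsto_0:
  fixes a c :: "nat \<Rightarrow> real"
  assumes a: "\<And>s. s \<ge> 1 \<Longrightarrow> \<bar>a s\<bar> \<le> C" and r: "\<bar>r\<bar> < 1"
    and c: "\<And>n. (\<Sum>t<n. (c (Suc t))\<^sup>2) \<le> B * real n"
    and H: "\<And>j. j \<ge> 1 \<Longrightarrow> (\<lambda>n. (\<Sum>t<n. a (Suc t) * c (Suc t + j)) / real n) \<longlonglongrightarrow> 0"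
  shows "(\<lambda>n. (\<Sum>t<n. ar_filter r a t * c (Suc t)) / real n) \<longlonglongrightarrow> 0"
proof -
  define A where "A k n = r ^ k * ((\<Sum>t\<in>{Suc k..<n}. a (t - k) * c (Suc t)) / real n)" for k n
  define K where "K = C * (1 + B) / 2"
  have eq: "(\<Sum>t<n. ar_filter r a t * c (Suc t)) / real n = (\<Sum>k. A k n)" for n
  proof -
    have "(\<Sum>t<n. ar_filter r a t * c (Suc t)) = (\<Sum>t<n. \<Sum>k<t. r ^ k * a (t - k) * c (Suc t))"
      by (simp add: ar_filter_eq_sum sum_distrib_right)
    also have "\<dots> = (\<Sum>k<n. \<Sum>t\<in>{Suc k..<n}. r ^ k * a (t - k) * c (Suc t))"
      by (rule sum_lessThan_triangle_swap)
    finally have "(\<Sum>t<n. ar_filter r a t * c (Suc t)) / real n = (\<Sum>k<n. A k n)"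
      by (simp add: A_def sum_divide_distrib sum_distrib_left mult.assoc)
    also have "\<dots> = (\<Sum>k. A k n)"
      by (rule suminf_finite[symmetric]) (auto simp: A_def)
    finally show ?thesis .
  qed
  have lim: "(\<lambda>n. A k n) \<longlonglongrightarrow> 0" for k
    using tendsto_mult_right_zero[OF avg_lagged_cross_tendsto_0[OF H]] by (simp add: A_def)
  have K: "0 \<le> K"
  proof -
    have "0 \<le> (\<Sum>t<1. (c (Suc t))\<^sup>2)" by (intro sum_nonneg) auto
    also have "\<dots> \<le> B" using c[of 1] by simp
    finally show ?thesis using a[of 1] by (simp add: K_def)
  qed
  have bound: "norm (A k n) \<le> \<bar>r\<bar> ^ k * K" for k n
  proof (cases "n = 0")
    case False
    hence "\<bar>\<Sum>t\<in>{Suc k..<n}. a (t - k) * c (Suc t)\<bar> / real n \<le> K"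
      using abs_sum_lagged_cross_le[OF a c] by (simp add: K_def divide_le_eq)
    hence "\<bar>r\<bar> ^ k * (\<bar>\<Sum>t\<in>{Suc k..<n}. a (t - k) * c (Suc t)\<bar> / real n) \<le> \<bar>r\<bar> ^ k * K"
      by (intro mult_left_mono) auto
    thus ?thesis by (simp add: A_def abs_mult power_abs abs_divide)
  qed (use K in \<open>simp add: A_def\<close>)
  have "summable (\<lambda>k. \<bar>r\<bar> ^ k * K)"
    using r by (intro summable_mult2 summable_geometric) auto
  from tannerys_theorem[of A "\<lambda>_. 0" sequentially "\<lambda>k. \<bar>r\<bar> ^ k * K", OF lim _ this] bound
  have "(\<lambda>n. \<Sum>k. A k n) \<longlonglongrightarrow> (\<Sum>k. 0::real)"
    by (auto intro: always_eventually)
  thus ?thesis by (simp add: eq)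
qed

section \<open>A strong law of large numbers in L2\<close>

lemma summable_inverse_Suc_sq: "summable (\<lambda>k::nat. 1 / (real k + 1)\<^sup>2)"
proof -
  have "summable (\<lambda>n::nat. inverse (real n ^ 2))" by (rule inverse_power_summable) simp
  hence "summable (\<lambda>n::nat. inverse (real (Suc n) ^ 2))" by (subst summable_Suc_iff)
  thus ?thesis by (simp add: inverse_eq_divide add.commute)
qed

lemma sum_by_parts_lessThan:
  fixes w A :: "nat \<Rightarrow> real"
  shows "(\<Sum>k<K. w k * (A (Suc k) - A k)) = w K * A K - w 0 * A 0 + (\<Sum>k<K. (w k - w (Suc k)) * A (Suc k))"
  by (induction K) (simp_all add: algebra_simps)

lemma inverse_cube_diff_le:
  fixes x :: real
  assumes x: "x \<ge> 1"
  shows "(1 / x^3 - 1 / (x+1)^3) * (x+1)\<^sup>2 \<le> 6 / x\<^sup>2"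
proof -
  have "(1 / x^3 - 1 / (x+1)^3) * (x+1)\<^sup>2 = ((x+1)^3 - x^3) * (x+1)^2 / (x^3 * (x+1)^3)"
    using x by (simp add: field_simps)
  also have "\<dots> = (3*x^2+3*x+1) / (x^3*(x+1))"
    using x by (simp add: divide_simps power3_eq_cube power2_eq_square) (simp add: algebra_simps)
  also have "\<dots> \<le> 6 * (x * (x+1)) / (x^3*(x+1))"
  proof (rule divide_right_mono)
    have "0 \<le> x^2" by simp
    hence "3*x^2+3*x+1 \<le> 6*x^2 + 6*x" using x by linarith
    thus "3*x^2+3*x+1 \<le> 6 * (x * (x+1))" by (simp add: power2_eq_square algebra_simps)
  qed (use x in simp)
  also have "\<dots> = 6 / x^2"
    using x by (simp add: divide_simps) (simp add: power2_eq_square power3_eq_cube algebra_simps)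
  finally show ?thesis .
qed

lemma summable_increments_over_cube:
  fixes A :: "nat \<Rightarrow> real"
  assumes mono: "\<And>k. A k \<le> A (Suc k)" and nn: "\<And>k. 0 \<le> A k"
    and G: "\<And>k. A k \<le> G * (real k + 1)\<^sup>2"
  shows "summable (\<lambda>k. (A (Suc k) - A k) / (real k + 1) ^ 3)"
proof (rule summableI_nonneg_bounded)
  fix k show "0 \<le> (A (Suc k) - A k) / (real k + 1) ^ 3" using mono[of k] by simp
next
  fix K
  define w where "w k = 1 / (real k + 1) ^ 3" for k
  have G0: "0 \<le> G" using G[of 0] nn[of 0] by simp
  have wd: "(w k - w (Suc k)) * (real (Suc k) + 1)\<^sup>2 \<le> 6 * (1 / (real k + 1)\<^sup>2)" for k
    using inverse_cube_diff_le[of "real k + 1"] by (simp add: w_def add_ac)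
  have wdn: "0 \<le> w k - w (Suc k)" for k
    by (simp add: w_def divide_simps power_mono)
  have "(\<Sum>k<K. (A (Suc k) - A k) / (real k + 1) ^ 3) = (\<Sum>k<K. w k * (A (Suc k) - A k))"
    by (simp add: w_def)
  also have "\<dots> = w K * A K - w 0 * A 0 + (\<Sum>k<K. (w k - w (Suc k)) * A (Suc k))"
    by (rule sum_by_parts_lessThan)
  also have "\<dots> \<le> G + (\<Sum>k<K. (w k - w (Suc k)) * (G * (real (Suc k) + 1)\<^sup>2))"
  proof (intro add_mono sum_mono mult_left_mono G wdn)
    have "w K * A K \<le> w K * (G * (real K + 1)\<^sup>2)"
      by (intro mult_left_mono G) (simp add: w_def)
    also have "\<dots> = G / (real K + 1)" by (simp add: w_def power2_eq_square power3_eq_cube)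
    also have "\<dots> \<le> G" using G0 mult_left_mono[of 1 "real K + 1" G] by (simp add: divide_le_eq)
    finally show "w K * A K - w 0 * A 0 \<le> G" using nn[of 0] by (simp add: w_def)
  qed
  also have "\<dots> \<le> G + G * 6 * (\<Sum>k. 1 / (real k + 1)\<^sup>2)"
  proof -
    have "(\<Sum>k<K. (w k - w (Suc k)) * (G * (real (Suc k) + 1)\<^sup>2)) \<le> (\<Sum>k<K. G * 6 * (1 / (real k + 1)\<^sup>2))"
      using wd G0 by (intro sum_mono) (metis (no_types, lifting) mult.assoc mult.left_commute mult_left_mono)
    also have "\<dots> = G * 6 * (\<Sum>k<K. 1 / (real k + 1)\<^sup>2)" by (simp add: sum_distrib_left)
    also have "\<dots> \<le> G * 6 * (\<Sum>k. 1 / (real k + 1)\<^sup>2)"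
      using G0 by (intro mult_left_mono sum_le_suminf summable_inverse_Suc_sq) auto
    finally show ?thesis by simp
  qed
  finally show "(\<Sum>k<K. (A (Suc k) - A k) / (real k + 1) ^ 3) \<le> G + G * 6 * (\<Sum>k. 1 / (real k + 1)\<^sup>2)" .
qed

lemma between_consecutive_squares: "(n::nat) \<ge> 1 \<Longrightarrow> \<exists>k. (k+1)^2 \<le> n \<and> n < (k+2)^2"
proof (induction n rule: dec_induct)
  case base show ?case by (intro exI[of _ 0]) (simp add: power2_eq_square)
next
  case (step n)
  then obtain k where k: "(k+1)^2 \<le> n" "n < (k+2)^2" by blast
  show ?case
  proof (cases "Suc n < (k+2)^2")
    case True thus ?thesis using k by (intro exI[of _ k]) auto
  next
    case False
    hence "Suc n = (k+2)^2" using k by linarith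
    moreover have "(k+2)^2 < ((k+1)+2)^2" by (intro power_strict_mono) auto
    ultimately show ?thesis by (intro exI[of _ "k+1"]) auto
  qed
qed

definition square_block_energy :: "(nat \<Rightarrow> real) \<Rightarrow> nat \<Rightarrow> real" where
  "square_block_energy s k =
     (s ((k+1)^2) - s 0)\<^sup>2 + (\<Sum>j\<in>{(k+1)^2..<(k+2)^2}. (s j - s ((k+1)^2))\<^sup>2)"

lemma avg_tendsto_0_of_square_block_energy:
  fixes s :: "nat \<Rightarrow> real"
  assumes s0: "s 0 = 0"
    and small: "\<And>d. d > 0 \<Longrightarrow> eventually (\<lambda>k. square_block_energy s k < d\<^sup>2 * (real k + 1)^4) sequentially"
  shows "(\<lambda>n. s n / real n) \<longlonglongrightarrow> 0"
proof (rule LIMSEQ_I)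
  fix r :: real assume r: "0 < r"
  define d where "d = r / 3"
  have d: "0 < d" "2 * d < r" using r by (auto simp: d_def)
  from small[OF d(1)] obtain K where K: "\<And>k. k \<ge> K \<Longrightarrow> square_block_energy s k < d\<^sup>2 * (real k + 1)^4"
    by (auto simp: eventually_sequentially)
  show "\<exists>no. \<forall>n\<ge>no. norm (s n / real n - 0) < r"
  proof (intro exI allI impI)
    fix n assume n: "n \<ge> (K+1)^2"
    hence n1: "n \<ge> 1" using one_le_power[of "K+1" 2] by linarith
    obtain k where k: "(k+1)^2 \<le> n" "n < (k+2)^2"
      using between_consecutive_squares[OF n1] by blast
    have "k \<ge> K"
    proof (rule ccontr)
      assume "\<not> K \<le> k"
      hence "k + 2 \<le> K + 1" by simp
      hence "(k+2)^2 \<le> (K+1)^2" by (rule power_mono) simp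
      thus False using k n by linarith
    qed
    define N where "N = (k+1)^2"
    have dN: "0 \<le> d * real N" using d by simp
    have "(real k + 1)^4 = (real N)\<^sup>2" by (simp add: N_def power_mult[symmetric] add.commute)
    hence energy: "square_block_energy s k \<le> (d * real N)\<^sup>2"
      using K[OF \<open>k \<ge> K\<close>] by (simp add: power_mult_distrib)
    have "(s N)\<^sup>2 \<le> square_block_energy s k"
      by (simp add: square_block_energy_def N_def s0 sum_nonneg)
    hence first: "\<bar>s N\<bar> \<le> d * real N"
      using energy power2_le_iff_abs_le[OF dN] by (meson order.trans)
    have "(s n - s N)\<^sup>2 \<le> (\<Sum>j\<in>{N..<(k+2)^2}. (s j - s N)\<^sup>2)"
      using k by (intro member_le_sum) (auto simp: N_def)
    also have "\<dots> \<le> square_block_energy s k" by (simp add: square_block_energy_def N_def)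
    finally have block: "\<bar>s n - s N\<bar> \<le> d * real N"
      using energy power2_le_iff_abs_le[OF dN] by (meson order.trans)
    have "\<bar>s n\<bar> \<le> 2 * d * real N" using first block by linarith
    also have "\<dots> \<le> 2 * d * real n"
      using of_nat_mono[OF k(1)[folded N_def]] d by (intro mult_left_mono) auto
    finally have "\<bar>s n\<bar> / real n \<le> 2 * d" using n1 by (simp add: divide_le_eq mult.commute)
    thus "norm (s n / real n - 0) < r" using d by (simp add: abs_divide)
  qed
qed

lemma summable_square_block_bound:
  fixes A E :: "nat \<Rightarrow> real"
  assumes A_mono: "\<And>k. A k \<le> A (Suc k)" and A_nonneg: "\<And>k. 0 \<le> A k"
    and A_le: "\<And>k. A k \<le> G * (real k + 1)\<^sup>2"
    and E_nonneg: "\<And>k. 0 \<le> E k" and E_le: "\<And>k. E k \<le> A k + 3 * (real k + 1) * (A (Suc k) - A k)"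
  shows "summable (\<lambda>k. E k / (real k + 1)^4)"
proof (rule summable_comparison_test)
  show "summable (\<lambda>k. G * (1 / (real k + 1)\<^sup>2) + 3 * ((A (Suc k) - A k) / (real k + 1)^3))"
    by (intro summable_add summable_mult summable_inverse_Suc_sq
        summable_increments_over_cube[of A G] A_mono A_nonneg A_le)
  show "\<exists>N. \<forall>k\<ge>N. norm (E k / (real k + 1)^4)
      \<le> G * (1 / (real k + 1)\<^sup>2) + 3 * ((A (Suc k) - A k) / (real k + 1)^3)"
  proof (intro exI allI impI)
    fix k :: nat
    define y where "y = real k + 1"
    have y: "y \<ge> 1" by (simp add: y_def)
    have "E k / y^4 \<le> (A k + 3 * y * (A (Suc k) - A k)) / y^4"
      using E_le[of k] y by (intro divide_right_mono) (auto simp: y_def)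
    also have "\<dots> = A k / y^4 + 3 * ((A (Suc k) - A k) / y^3)"
      using y by (simp add: field_simps power2_eq_square power3_eq_cube power4_eq_xxxx)
    also have "A k / y^4 \<le> G * y^2 / y^4"
      using A_le[of k] y by (intro divide_right_mono) (auto simp: y_def)
    also have "\<dots> = G * (1 / y^2)" using y by (simp add: field_simps power2_eq_square power4_eq_xxxx)
    finally show "norm (E k / (real k + 1)^4)
        \<le> G * (1 / (real k + 1)\<^sup>2) + 3 * ((A (Suc k) - A k) / (real k + 1)^3)"
      using E_nonneg[of k] by (simp add: y_def)
  qed
qed

lemma (in prob_space) AE_eventually_less_of_summable:
  fixes Q :: "nat \<Rightarrow> 'a \<Rightarrow> real" and g :: "nat \<Rightarrow> real"
  assumes [measurable]: "\<And>k. Q k \<in> borel_measurable M"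
    and Q_integrable: "\<And>k. integrable M (Q k)" and Q_nonneg: "\<And>k \<omega>. 0 \<le> Q k \<omega>"
    and g: "\<And>k. 0 < g k" and summable: "summable (\<lambda>k. (\<integral>\<omega>. Q k \<omega> \<partial>M) / g k)"
  shows "AE \<omega> in M. \<forall>d>0. eventually (\<lambda>k. Q k \<omega> < d * g k) sequentially"
proof -
  define E where "E j k = {\<omega>\<in>space M. 1 / (real j + 1) * g k \<le> Q k \<omega>}" for j k
  have E_sets[measurable]: "E j k \<in> sets M" for j k unfolding E_def by measurable
  have "AE \<omega> in M. eventually (\<lambda>k. \<omega> \<in> space M - E j k) sequentially" for j
  proof (rule borel_cantelli_AE1)
    show "emeasure M (E j k) < \<infinity>" for k by (simp add: emeasure_eq_measure)
    have "measure M (E j k) \<le> (\<integral>\<omega>. Q k \<omega> \<partial>M) / (1 / (real j + 1) * g k)" for k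
      unfolding E_def by (rule integral_Markov_inequality_measure[OF Q_integrable]) (use g in \<open>auto simp: Q_nonneg\<close>)
    moreover have "summable (\<lambda>k. (real j + 1) * ((\<integral>\<omega>. Q k \<omega> \<partial>M) / g k))"
      by (intro summable_mult summable)
    ultimately show "summable (\<lambda>k. measure M (E j k))"
      by (rule_tac summable_comparison_test[OF exI[of _ 0]]) (auto simp: field_simps)
  qed simp
  hence "AE \<omega> in M. \<forall>j. eventually (\<lambda>k. \<omega> \<in> space M - E j k) sequentially"
    by (simp add: AE_all_countable)
  thus ?thesis
  proof (rule AE_mp[OF _ AE_I2[OF impI]], intro allI impI)
    fix \<omega> and d :: real
    assume \<omega>: "\<omega> \<in> space M" and ev: "\<forall>j. eventually (\<lambda>k. \<omega> \<in> space M - E j k) sequentially" and "d > 0"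
    then obtain j :: nat where "1 / real (Suc j) < d" by (blast elim: nat_approx_posE)
    hence j: "1 / (real j + 1) < d" by (simp add: add.commute)
    from ev[rule_format, of j] show "eventually (\<lambda>k. Q k \<omega> < d * g k) sequentially"
    proof (elim eventually_mono)
      fix k assume "\<omega> \<in> space M - E j k"
      hence "Q k \<omega> < 1 / (real j + 1) * g k" using \<omega> by (auto simp: E_def)
      also have "\<dots> < d * g k" using j g[of k] by (intro mult_strict_right_mono)
      finally show "Q k \<omega> < d * g k" .
    qed
  qed
qed

text \<open>Markov's inequality and Borel--Cantelli along the squares control the partial sums at the
  squares and their oscillation in between.\<close>
lemma (in prob_space) AE_avg_tendsto_0_of_L2_increments:
  fixes S :: "nat \<Rightarrow> 'a \<Rightarrow> real" and V :: "nat \<Rightarrow> real"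
  assumes meas[measurable]: "\<And>n. S n \<in> borel_measurable M"
    and int: "\<And>m n. integrable M (\<lambda>\<omega>. (S n \<omega> - S m \<omega>)\<^sup>2)"
    and S0: "\<And>\<omega>. \<omega> \<in> space M \<Longrightarrow> S 0 \<omega> = 0"
    and var: "\<And>m n. m \<le> n \<Longrightarrow> (\<integral>\<omega>. (S n \<omega> - S m \<omega>)\<^sup>2 \<partial>M) \<le> V n - V m"
    and mono: "mono V" and D: "\<And>n. V n \<le> D * real n"
  shows "AE \<omega> in M. (\<lambda>n. S n \<omega> / real n) \<longlonglongrightarrow> 0"
proof -
  define N where "N k = (k+1)^2" for k :: nat
  have N_Suc: "N (Suc k) = (k+2)^2" for k by (simp add: N_def)
  define Q where "Q k \<omega> = square_block_energy (\<lambda>n. S n \<omega>) k" for k \<omega>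
  have Q_eq: "Q k \<omega> = (S (N k) \<omega> - S 0 \<omega>)\<^sup>2 + (\<Sum>j\<in>{N k..<N (Suc k)}. (S j \<omega> - S (N k) \<omega>)\<^sup>2)" for k \<omega>
    by (simp add: Q_def square_block_energy_def N_def N_Suc)
  have Q_measurable[measurable]: "Q k \<in> borel_measurable M" for k unfolding Q_eq by measurable
  have Q_integrable: "integrable M (Q k)" for k
    unfolding Q_eq by (intro Bochner_Integration.integrable_add Bochner_Integration.integrable_sum int)
  have Q_nonneg: "0 \<le> Q k \<omega>" for k \<omega> unfolding Q_eq by (intro add_nonneg_nonneg sum_nonneg) auto
  define A where "A k = V (N k) - V 0" for k
  have N_mono: "N k \<le> N (Suc k)" for k unfolding N_def by (intro power_mono) auto
  have A_mono: "A k \<le> A (Suc k)" for k unfolding A_def using mono N_mono by (simp add: monoD)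
  have A_nonneg: "0 \<le> A k" for k unfolding A_def using mono by (simp add: monoD)
  have A_le: "A k \<le> (D - V 0) * (real k + 1)\<^sup>2" for k
  proof -
    have "- V 0 * 1 \<le> - V 0 * (real k + 1)\<^sup>2"
      using D[of 0] by (intro mult_left_mono) (simp_all add: one_le_power)
    thus ?thesis using D[of "N k"] by (simp add: A_def N_def add.commute algebra_simps)
  qed
  have EQ: "(\<integral>\<omega>. Q k \<omega> \<partial>M) \<le> A k + 3 * (real k + 1) * (A (Suc k) - A k)" for k
  proof -
    have "(\<integral>\<omega>. Q k \<omega> \<partial>M) = (\<integral>\<omega>. (S (N k) \<omega> - S 0 \<omega>)\<^sup>2 \<partial>M)
        + (\<Sum>j\<in>{N k..<N (Suc k)}. \<integral>\<omega>. (S j \<omega> - S (N k) \<omega>)\<^sup>2 \<partial>M)"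
      unfolding Q_eq by (simp add: int integral_sum integrable_sum)
    also have "\<dots> \<le> A k + (\<Sum>j\<in>{N k..<N (Suc k)}. A (Suc k) - A k)"
    proof (intro add_mono sum_mono)
      show "(\<integral>\<omega>. (S (N k) \<omega> - S 0 \<omega>)\<^sup>2 \<partial>M) \<le> A k" unfolding A_def by (intro var) simp
      fix j assume j: "j \<in> {N k..<N (Suc k)}"
      have "(\<integral>\<omega>. (S j \<omega> - S (N k) \<omega>)\<^sup>2 \<partial>M) \<le> V j - V (N k)" using j by (intro var) simp
      also have "\<dots> \<le> A (Suc k) - A k" using j mono by (simp add: A_def monoD)
      finally show "(\<integral>\<omega>. (S j \<omega> - S (N k) \<omega>)\<^sup>2 \<partial>M) \<le> A (Suc k) - A k" .
    qed
    also have "card {N k..<N (Suc k)} = 2 * k + 3" by (simp add: N_def power2_eq_square)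
    hence "(\<Sum>j\<in>{N k..<N (Suc k)}. A (Suc k) - A k) \<le> 3 * (real k + 1) * (A (Suc k) - A k)"
      using A_mono[of k] by (simp add: mult_right_mono)
    finally show ?thesis by simp
  qed
  have summable: "summable (\<lambda>k. (\<integral>\<omega>. Q k \<omega> \<partial>M) / (real k + 1)^4)"
    by (rule summable_square_block_bound[OF A_mono A_nonneg A_le _ EQ])
      (intro integral_nonneg_AE AE_I2 Q_nonneg)
  have "AE \<omega> in M. \<forall>d>0. eventually (\<lambda>k. Q k \<omega> < d * (real k + 1)^4) sequentially"
    by (rule AE_eventually_less_of_summable[OF Q_measurable Q_integrable Q_nonneg _ summable]) simp
  thus ?thesis
  proof (rule AE_mp[OF _ AE_I2[OF impI]])
    fix \<omega> assume \<omega>: "\<omega> \<in> space M"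
      and small: "\<forall>d>0. eventually (\<lambda>k. Q k \<omega> < d * (real k + 1)^4) sequentially"
    show "(\<lambda>n. S n \<omega> / real n) \<longlonglongrightarrow> 0"
      by (rule avg_tendsto_0_of_square_block_energy) (use S0[OF \<omega>] small in \<open>auto simp: Q_def\<close>)
  qed
qed

context prob_space
begin

definition finite_moments :: "('a \<Rightarrow> real) \<Rightarrow> bool" where
  "finite_moments X \<longleftrightarrow> X \<in> borel_measurable M \<and> (\<forall>k. integrable M (\<lambda>\<omega>. \<bar>X \<omega>\<bar> ^ k))"

lemma finite_moments_measurable: "finite_moments X \<Longrightarrow> X \<in> borel_measurable M"
  by (simp add: finite_moments_def)

lemma finite_moments_integrable: "finite_moments X \<Longrightarrow> integrable M X"
  using integrable_abs_iff[of X M] by (auto simp: finite_moments_def dest: spec[of _ 1])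

lemma finite_moments_const: "finite_moments (\<lambda>_. c)"
  unfolding finite_moments_def by auto

lemma finite_moments_mult:
  assumes X: "finite_moments X" and Y: "finite_moments Y"
  shows "finite_moments (\<lambda>\<omega>. X \<omega> * Y \<omega>)"
proof -
  note [measurable] = finite_moments_measurable[OF X] finite_moments_measurable[OF Y]
  have "integrable M (\<lambda>\<omega>. \<bar>X \<omega> * Y \<omega>\<bar> ^ k)" for k
  proof (rule Bochner_Integration.integrable_bound)
    show "integrable M (\<lambda>\<omega>. (\<bar>X \<omega>\<bar> ^ (2*k) + \<bar>Y \<omega>\<bar> ^ (2*k)) / 2)"
      using X Y by (auto simp: finite_moments_def)
    show "AE \<omega> in M. norm (\<bar>X \<omega> * Y \<omega>\<bar> ^ k) \<le> norm ((\<bar>X \<omega>\<bar> ^ (2*k) + \<bar>Y \<omega>\<bar> ^ (2*k)) / 2)"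
    proof (intro AE_I2)
      fix \<omega>
      define a where "a = \<bar>X \<omega>\<bar> ^ k" define b where "b = \<bar>Y \<omega>\<bar> ^ k"
      have "a * b \<le> (a\<^sup>2 + b\<^sup>2) / 2" using sum_squares_bound[of a b] by simp
      moreover have "0 \<le> a * b" by (simp add: a_def b_def)
      ultimately show "norm (\<bar>X \<omega> * Y \<omega>\<bar> ^ k) \<le> norm ((\<bar>X \<omega>\<bar> ^ (2*k) + \<bar>Y \<omega>\<bar> ^ (2*k)) / 2)"
        by (simp add: a_def b_def abs_mult power_mult_distrib power_mult[symmetric] mult.commute)
    qed
  qed simp
  thus ?thesis by (simp add: finite_moments_def)
qed

lemma finite_moments_add:
  assumes X: "finite_moments X" and Y: "finite_moments Y"
  shows "finite_moments (\<lambda>\<omega>. X \<omega> + Y \<omega>)"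
proof -
  note [measurable] = finite_moments_measurable[OF X] finite_moments_measurable[OF Y]
  have "integrable M (\<lambda>\<omega>. \<bar>X \<omega> + Y \<omega>\<bar> ^ k)" for k
  proof (rule Bochner_Integration.integrable_bound)
    show "integrable M (\<lambda>\<omega>. 2 ^ k * (\<bar>X \<omega>\<bar> ^ k + \<bar>Y \<omega>\<bar> ^ k))"
      using X Y by (auto simp: finite_moments_def)
    show "AE \<omega> in M. norm (\<bar>X \<omega> + Y \<omega>\<bar> ^ k) \<le> norm (2 ^ k * (\<bar>X \<omega>\<bar> ^ k + \<bar>Y \<omega>\<bar> ^ k))"
    proof (intro AE_I2)
      fix \<omega>
      define a where "a = \<bar>X \<omega>\<bar>" define b where "b = \<bar>Y \<omega>\<bar>"
      have ab: "0 \<le> a" "0 \<le> b" by (auto simp: a_def b_def)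
      have "\<bar>X \<omega> + Y \<omega>\<bar> ^ k \<le> (2 * max a b) ^ k"
        by (intro power_mono) (auto simp: a_def b_def)
      also have "\<dots> = 2 ^ k * max a b ^ k" by (simp add: power_mult_distrib)
      also have "\<dots> \<le> 2 ^ k * (a ^ k + b ^ k)"
        using ab by (intro mult_left_mono) (auto simp: max_def)
      finally show "norm (\<bar>X \<omega> + Y \<omega>\<bar> ^ k) \<le> norm (2 ^ k * (\<bar>X \<omega>\<bar> ^ k + \<bar>Y \<omega>\<bar> ^ k))"
        by (simp add: a_def b_def)
    qed
  qed simp
  thus ?thesis by (simp add: finite_moments_def)
qed

lemma finite_moments_scale: "finite_moments X \<Longrightarrow> finite_moments (\<lambda>\<omega>. c * X \<omega>)"
  using finite_moments_mult[OF finite_moments_const] by blast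

lemma finite_moments_diff: "finite_moments X \<Longrightarrow> finite_moments Y \<Longrightarrow> finite_moments (\<lambda>\<omega>. X \<omega> - Y \<omega>)"
  using finite_moments_add[of X "\<lambda>\<omega>. (-1) * Y \<omega>"] finite_moments_scale[of Y "-1"] by simp

lemma finite_moments_sum: "(\<And>i. i \<in> I \<Longrightarrow> finite_moments (X i)) \<Longrightarrow> finite_moments (\<lambda>\<omega>. \<Sum>i\<in>I. X i \<omega>)"
  by (induction I rule: infinite_finite_induct) (auto intro: finite_moments_const finite_moments_add)

lemma finite_moments_power: "finite_moments X \<Longrightarrow> finite_moments (\<lambda>\<omega>. X \<omega> ^ n)"
  by (induction n) (auto intro: finite_moments_const finite_moments_mult)

lemma integral_sum_sq:
  assumes Y: "\<And>t. t \<in> I \<Longrightarrow> finite_moments (Y t)"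
  shows "(\<integral>\<omega>. (\<Sum>t\<in>I. Y t \<omega>)\<^sup>2 \<partial>M) = (\<Sum>s\<in>I. \<Sum>t\<in>I. \<integral>\<omega>. Y s \<omega> * Y t \<omega> \<partial>M)"
proof -
  have "(\<integral>\<omega>. (\<Sum>t\<in>I. Y t \<omega>)\<^sup>2 \<partial>M) = (\<integral>\<omega>. (\<Sum>s\<in>I. \<Sum>t\<in>I. Y s \<omega> * Y t \<omega>) \<partial>M)"
    by (simp add: power2_eq_square sum_product)
  also have "\<dots> = (\<Sum>s\<in>I. \<integral>\<omega>. (\<Sum>t\<in>I. Y s \<omega> * Y t \<omega>) \<partial>M)"
    by (intro Bochner_Integration.integral_sum finite_moments_integrable finite_moments_sum finite_moments_mult Y)
  also have "\<dots> = (\<Sum>s\<in>I. \<Sum>t\<in>I. \<integral>\<omega>. Y s \<omega> * Y t \<omega> \<partial>M)"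
    by (intro sum.cong refl Bochner_Integration.integral_sum finite_moments_integrable finite_moments_mult Y)
  finally show ?thesis .
qed

lemma integral_sum_sq_orthogonal:
  fixes Y :: "nat \<Rightarrow> 'a \<Rightarrow> real"
  assumes fin: "finite I" and Y: "\<And>t. t \<in> I \<Longrightarrow> finite_moments (Y t)"
    and orth: "\<And>s t. s \<in> I \<Longrightarrow> t \<in> I \<Longrightarrow> s < t \<Longrightarrow> (\<integral>\<omega>. Y s \<omega> * Y t \<omega> \<partial>M) = 0"
  shows "(\<integral>\<omega>. (\<Sum>t\<in>I. Y t \<omega>)\<^sup>2 \<partial>M) = (\<Sum>t\<in>I. \<integral>\<omega>. (Y t \<omega>)\<^sup>2 \<partial>M)"
proof -
  have inner: "(\<Sum>t\<in>I. \<integral>\<omega>. Y s \<omega> * Y t \<omega> \<partial>M) = (\<integral>\<omega>. (Y s \<omega>)\<^sup>2 \<partial>M)" if s: "s \<in> I" for s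
  proof -
    have "(\<Sum>t\<in>I. \<integral>\<omega>. Y s \<omega> * Y t \<omega> \<partial>M) = (\<integral>\<omega>. Y s \<omega> * Y s \<omega> \<partial>M) + (\<Sum>t\<in>I - {s}. \<integral>\<omega>. Y s \<omega> * Y t \<omega> \<partial>M)"
      using fin s by (simp add: sum.remove)
    also have "(\<Sum>t\<in>I - {s}. \<integral>\<omega>. Y s \<omega> * Y t \<omega> \<partial>M) = 0"
    proof (intro sum.neutral ballI)
      fix t assume t: "t \<in> I - {s}"
      show "(\<integral>\<omega>. Y s \<omega> * Y t \<omega> \<partial>M) = 0"
      proof (cases "s < t")
        case True thus ?thesis using orth s t by auto
      next
        case False hence "t < s" using t by auto
        thus ?thesis using orth[of t s] s t by (simp add: mult.commute)
      qed
    qed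
    finally show ?thesis by (simp add: power2_eq_square)
  qed
  have "(\<integral>\<omega>. (\<Sum>t\<in>I. Y t \<omega>)\<^sup>2 \<partial>M) = (\<Sum>s\<in>I. \<Sum>t\<in>I. \<integral>\<omega>. Y s \<omega> * Y t \<omega> \<partial>M)"
    by (rule integral_sum_sq) (rule Y)
  also have "\<dots> = (\<Sum>t\<in>I. \<integral>\<omega>. (Y t \<omega>)\<^sup>2 \<partial>M)" by (intro sum.cong refl inner)
  finally show ?thesis .
qed

lemma AE_avg_tendsto_0_orthogonal:
  fixes Y :: "nat \<Rightarrow> 'a \<Rightarrow> real"
  assumes Y: "\<And>t. finite_moments (Y t)"
    and orth: "\<And>s t. s < t \<Longrightarrow> (\<integral>\<omega>. Y s \<omega> * Y t \<omega> \<partial>M) = 0"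
    and D: "\<And>n. (\<Sum>t<n. \<integral>\<omega>. (Y t \<omega>)\<^sup>2 \<partial>M) \<le> D * real n"
  shows "AE \<omega> in M. (\<lambda>n. (\<Sum>t<n. Y t \<omega>) / real n) \<longlonglongrightarrow> 0"
proof -
  define S where "S n \<omega> = (\<Sum>t<n. Y t \<omega>)" for n \<omega>
  define V where "V n = (\<Sum>t<n. \<integral>\<omega>. (Y t \<omega>)\<^sup>2 \<partial>M)" for n
  have Smom: "finite_moments (S n)" for n unfolding S_def by (intro finite_moments_sum Y)
  have diff: "S n \<omega> - S m \<omega> = (\<Sum>t\<in>{m..<n}. Y t \<omega>)" if "m \<le> n" for m n \<omega>
    using sum_diff_nat_ivl[of 0 m n "\<lambda>t. Y t \<omega>"] that by (simp add: S_def lessThan_atLeast0)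
  have diffV: "V n - V m = (\<Sum>t\<in>{m..<n}. \<integral>\<omega>. (Y t \<omega>)\<^sup>2 \<partial>M)" if "m \<le> n" for m n
    using sum_diff_nat_ivl[of 0 m n] that by (simp add: V_def lessThan_atLeast0)
  have "AE \<omega> in M. (\<lambda>n. S n \<omega> / real n) \<longlonglongrightarrow> 0"
  proof (rule AE_avg_tendsto_0_of_L2_increments[where V = V and D = D])
    show "S n \<in> borel_measurable M" for n by (rule finite_moments_measurable[OF Smom])
    show "integrable M (\<lambda>\<omega>. (S n \<omega> - S m \<omega>)\<^sup>2)" for m n
      by (intro finite_moments_integrable finite_moments_power finite_moments_diff Smom)
    show "S 0 \<omega> = 0" for \<omega> by (simp add: S_def)
    show "(\<integral>\<omega>. (S n \<omega> - S m \<omega>)\<^sup>2 \<partial>M) \<le> V n - V m" if "m \<le> n" for m n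
    proof -
      have "(\<integral>\<omega>. (S n \<omega> - S m \<omega>)\<^sup>2 \<partial>M) = (\<integral>\<omega>. (\<Sum>t\<in>{m..<n}. Y t \<omega>)\<^sup>2 \<partial>M)"
        using diff[OF that] by simp
      also have "\<dots> = V n - V m" unfolding diffV[OF that] by (rule integral_sum_sq_orthogonal) (auto intro: Y orth)
      finally show ?thesis by simp
    qed
    show "mono V" unfolding V_def
      by (intro monoI sum_mono2) auto
  qed (use D in \<open>auto simp: V_def\<close>)
  thus ?thesis by (simp add: S_def)
qed

end

section \<open>Gaussian white noise\<close>

locale gaussian_noise = prob_space M for M :: "'a measure" +
  fixes \<epsilon> :: "nat \<Rightarrow> 'a \<Rightarrow> real" and \<sigma> :: real
  assumes indep: "indep_vars (\<lambda>_. borel) \<epsilon> {1..}"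
    and normal: "\<And>t. t \<ge> 1 \<Longrightarrow> distributed M lborel (\<epsilon> t) (normal_density 0 \<sigma>)"
    and sigma_pos: "0 < \<sigma>"
begin

lemma noise_measurable[measurable]: "t \<ge> 1 \<Longrightarrow> \<epsilon> t \<in> borel_measurable M"
  using indep by (auto simp: indep_vars_def)

lemma integrable_integral_noise_fun:
  assumes t: "t \<ge> 1" and g[measurable]: "g \<in> borel_measurable borel"
    and gi: "integrable lborel (\<lambda>x. normal_density 0 \<sigma> x * g x)"
  shows "integrable M (\<lambda>\<omega>. g (\<epsilon> t \<omega>))"
    and "(\<integral>\<omega>. g (\<epsilon> t \<omega>) \<partial>M) = (\<integral>x. normal_density 0 \<sigma> x * g x \<partial>lborel)"
  using distributed_integrable[OF normal[OF t], of g] distributed_integral[OF normal[OF t], of g] gi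
  by auto

lemma finite_moments_noise: "t \<ge> 1 \<Longrightarrow> finite_moments (\<epsilon> t)"
proof -
  assume t: "t \<ge> 1"
  have "integrable M (\<lambda>\<omega>. \<bar>\<epsilon> t \<omega>\<bar> ^ k)" for k
  proof -
    have "integrable lborel (\<lambda>x. normal_density 0 \<sigma> x * \<bar>x\<bar> ^ k)"
      using integrable_normal_moment_abs[where \<mu>=0 and \<sigma>=\<sigma> and k=k] sigma_pos by simp
    thus ?thesis by (intro integrable_integral_noise_fun(1)[OF t]) auto
  qed
  thus ?thesis using t by (simp add: finite_moments_def)
qed

definition determined_before :: "nat \<Rightarrow> ('a \<Rightarrow> real) \<Rightarrow> bool" where
  "determined_before t F \<longleftrightarrow> (\<exists>f \<in> borel_measurable (PiM {1..<t} (\<lambda>_. borel)).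
       \<forall>\<omega>\<in>space M. F \<omega> = f (\<lambda>i\<in>{1..<t}. \<epsilon> i \<omega>))"

lemma determined_before_const: "determined_before t (\<lambda>_. c)"
  unfolding determined_before_def by (intro bexI[of _ "\<lambda>_. c"]) auto

lemma determined_before_noise: "1 \<le> s \<Longrightarrow> s < t \<Longrightarrow> determined_before t (\<epsilon> s)"
  unfolding determined_before_def by (intro bexI[of _ "\<lambda>y. y s"]) auto

lemma determined_before_compose2:
  assumes "determined_before t F" "determined_before t G" and h[measurable]: "(\<lambda>(x,y). h x y) \<in> borel_measurable (borel \<Otimes>\<^sub>M borel)"
  shows "determined_before t (\<lambda>\<omega>. h (F \<omega>) (G \<omega>))"
proof -
  obtain f g where f[measurable]: "f \<in> borel_measurable (PiM {1..<t} (\<lambda>_. borel))"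
      and g[measurable]: "g \<in> borel_measurable (PiM {1..<t} (\<lambda>_. borel))"
      and fg: "\<forall>\<omega>\<in>space M. F \<omega> = f (\<lambda>i\<in>{1..<t}. \<epsilon> i \<omega>)" "\<forall>\<omega>\<in>space M. G \<omega> = g (\<lambda>i\<in>{1..<t}. \<epsilon> i \<omega>)"
    using assms unfolding determined_before_def by blast
  have m: "(\<lambda>y. h (f y) (g y)) \<in> borel_measurable (PiM {1..<t} (\<lambda>_. borel))"
    using measurable_compose[OF measurable_Pair[OF f g] h] by simp
  show ?thesis unfolding determined_before_def
    by (intro bexI[OF _ m]) (use fg in auto)
qed

lemma determined_before_add: "determined_before t F \<Longrightarrow> determined_before t G \<Longrightarrow> determined_before t (\<lambda>\<omega>. F \<omega> + G \<omega>)"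
  by (rule determined_before_compose2[where h = "(+)"]) auto

lemma determined_before_mult: "determined_before t F \<Longrightarrow> determined_before t G \<Longrightarrow> determined_before t (\<lambda>\<omega>. F \<omega> * G \<omega>)"
  by (rule determined_before_compose2[where h = "(*)"]) auto

lemma determined_before_scale: "determined_before t F \<Longrightarrow> determined_before t (\<lambda>\<omega>. c * F \<omega>)"
  using determined_before_mult[OF determined_before_const] by blast

lemma determined_before_diff: "determined_before t F \<Longrightarrow> determined_before t G \<Longrightarrow> determined_before t (\<lambda>\<omega>. F \<omega> - G \<omega>)"
  by (rule determined_before_compose2[where h = "(-)"]) auto

lemma determined_before_power: "determined_before t F \<Longrightarrow> determined_before t (\<lambda>\<omega>. F \<omega> ^ n)"
  by (induction n) (auto intro: determined_before_const determined_before_mult)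

lemma determined_before_mono:
  assumes "determined_before t F" "t \<le> t'" shows "determined_before t' F"
proof -
  obtain f where f[measurable]: "f \<in> borel_measurable (PiM {1..<t} (\<lambda>_. borel))"
      and fF: "\<forall>\<omega>\<in>space M. F \<omega> = f (\<lambda>i\<in>{1..<t}. \<epsilon> i \<omega>)"
    using assms unfolding determined_before_def by blast
  have sub: "{1..<t} \<subseteq> {1..<t'}" using assms by auto
  have m: "(\<lambda>y. f (restrict y {1..<t})) \<in> borel_measurable (PiM {1..<t'} (\<lambda>_. borel))"
    by (rule measurable_compose[OF measurable_restrict_subset[OF sub] f])
  show ?thesis unfolding determined_before_def
  proof (intro bexI[OF _ m] ballI)
    fix \<omega> assume "\<omega> \<in> space M"
    hence "F \<omega> = f (\<lambda>i\<in>{1..<t}. \<epsilon> i \<omega>)" using fF by blast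
    also have "(\<lambda>i\<in>{1..<t}. \<epsilon> i \<omega>) = restrict (\<lambda>i\<in>{1..<t'}. \<epsilon> i \<omega>) {1..<t}"
      using sub by (auto simp: fun_eq_iff)
    finally show "F \<omega> = f (restrict (\<lambda>i\<in>{1..<t'}. \<epsilon> i \<omega>) {1..<t})" .
  qed
qed

lemma integral_noise_fun_mult_indep:
  assumes t: "t \<ge> 1" and F: "determined_before t F" "integrable M F"
    and g[measurable]: "g \<in> borel_measurable borel" and gi: "integrable M (\<lambda>\<omega>. g (\<epsilon> t \<omega>))"
  shows "(\<integral>\<omega>. g (\<epsilon> t \<omega>) * F \<omega> \<partial>M) = (\<integral>\<omega>. g (\<epsilon> t \<omega>) \<partial>M) * (\<integral>\<omega>. F \<omega> \<partial>M)"
proof -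
  obtain f where f[measurable]: "f \<in> borel_measurable (PiM {1..<t} (\<lambda>_. borel))"
      and fF: "\<forall>\<omega>\<in>space M. F \<omega> = f (\<lambda>i\<in>{1..<t}. \<epsilon> i \<omega>)"
    using F unfolding determined_before_def by blast
  have iv: "indep_var (PiM {t} (\<lambda>_. borel)) (\<lambda>\<omega>. \<lambda>i\<in>{t}. \<epsilon> i \<omega>)
      (PiM {1..<t} (\<lambda>_. borel)) (\<lambda>\<omega>. \<lambda>i\<in>{1..<t}. \<epsilon> i \<omega>)"
    by (rule indep_var_restrict[OF indep]) (use t in auto)
  have m1: "(\<lambda>y. g (y t)) \<in> borel_measurable (PiM {t} (\<lambda>_. borel))" by measurable
  have iv2: "indep_var borel ((\<lambda>y. g (y t)) \<circ> (\<lambda>\<omega>. \<lambda>i\<in>{t}. \<epsilon> i \<omega>)) borel (f \<circ> (\<lambda>\<omega>. \<lambda>i\<in>{1..<t}. \<epsilon> i \<omega>))"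
    by (rule indep_var_compose[OF iv m1 f])
  have e1: "((\<lambda>y. g (y t)) \<circ> (\<lambda>\<omega>. \<lambda>i\<in>{t}. \<epsilon> i \<omega>)) = (\<lambda>\<omega>. g (\<epsilon> t \<omega>))" by (auto simp: fun_eq_iff)
  define F' where "F' = f \<circ> (\<lambda>\<omega>. \<lambda>i\<in>{1..<t}. \<epsilon> i \<omega>)"
  have FF': "\<And>\<omega>. \<omega> \<in> space M \<Longrightarrow> F \<omega> = F' \<omega>" using fF by (simp add: F'_def)
  have iF': "integrable M F'"
  proof -
    have "integrable M F \<longleftrightarrow> integrable M F'"
      by (rule Bochner_Integration.integrable_cong) (auto simp: FF')
    thus ?thesis using F(2) by simp
  qed
  have iv3: "indep_var borel (\<lambda>\<omega>. g (\<epsilon> t \<omega>)) borel F'" using iv2 by (simp add: e1 F'_def)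
  have "(\<integral>\<omega>. g (\<epsilon> t \<omega>) * F \<omega> \<partial>M) = (\<integral>\<omega>. g (\<epsilon> t \<omega>) * F' \<omega> \<partial>M)"
    by (intro Bochner_Integration.integral_cong) (auto simp: FF')
  also have "\<dots> = (\<integral>\<omega>. g (\<epsilon> t \<omega>) \<partial>M) * (\<integral>\<omega>. F' \<omega> \<partial>M)"
    by (rule indep_var_lebesgue_integral[OF iv3 gi iF'])
  also have "(\<integral>\<omega>. F' \<omega> \<partial>M) = (\<integral>\<omega>. F \<omega> \<partial>M)"
    by (intro Bochner_Integration.integral_cong) (auto simp: FF')
  finally show ?thesis .
qed

lemma integral_noise: "t \<ge> 1 \<Longrightarrow> (\<integral>\<omega>. \<epsilon> t \<omega> \<partial>M) = 0"
  using normal_distributed_expectation[OF sigma_pos normal] by simp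

lemma integral_noise_sq: "t \<ge> 1 \<Longrightarrow> (\<integral>\<omega>. (\<epsilon> t \<omega>)\<^sup>2 \<partial>M) = \<sigma>\<^sup>2"
  using normal_distributed_variance[OF sigma_pos normal] integral_noise by simp

lemma integral_noise_mult_eq_0:
  "t \<ge> 1 \<Longrightarrow> determined_before t F \<Longrightarrow> finite_moments F \<Longrightarrow> (\<integral>\<omega>. \<epsilon> t \<omega> * F \<omega> \<partial>M) = 0"
  using integral_noise_fun_mult_indep[of t F "\<lambda>x. x"] integral_noise finite_moments_integrable
    finite_moments_noise
  by simp

lemma integral_noise_sq_mult:
  "t \<ge> 1 \<Longrightarrow> determined_before t F \<Longrightarrow> finite_moments F \<Longrightarrow>
    (\<integral>\<omega>. (\<epsilon> t \<omega>)\<^sup>2 * F \<omega> \<partial>M) = \<sigma>\<^sup>2 * (\<integral>\<omega>. F \<omega> \<partial>M)"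
  using integral_noise_fun_mult_indep[of t F "\<lambda>x. x\<^sup>2"] integral_noise_sq finite_moments_integrable
    finite_moments_noise finite_moments_power
  by simp

definition noise_sq_var where "noise_sq_var = (\<integral>x. normal_density 0 \<sigma> x * ((x\<^sup>2 - \<sigma>\<^sup>2)\<^sup>2) \<partial>lborel)"

lemma integral_centered_noise_sq_sq: "t \<ge> 1 \<Longrightarrow> (\<integral>\<omega>. ((\<epsilon> t \<omega>)\<^sup>2 - \<sigma>\<^sup>2)\<^sup>2 \<partial>M) = noise_sq_var"
proof -
  assume t: "t \<ge> 1"
  have i: "integrable lborel (\<lambda>x. normal_density 0 \<sigma> x * ((x\<^sup>2 - \<sigma>\<^sup>2)\<^sup>2))"
  proof -
    have e: "(\<lambda>x. normal_density 0 \<sigma> x * ((x\<^sup>2 - \<sigma>\<^sup>2)\<^sup>2)) = (\<lambda>x. normal_density 0 \<sigma> x * (x - 0) ^ 4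
        - 2 * \<sigma>\<^sup>2 * (normal_density 0 \<sigma> x * (x - 0) ^ 2) + \<sigma>^4 * normal_density 0 \<sigma> x)"
      by (auto simp: fun_eq_iff power2_eq_square power4_eq_xxxx algebra_simps)
    show ?thesis unfolding e using sigma_pos
      by (intro Bochner_Integration.integrable_add Bochner_Integration.integrable_diff
          Bochner_Integration.integrable_mult_right integrable_normal_moment integrable_normal_density)
  qed
  show ?thesis using integrable_integral_noise_fun(2)[OF t _ i] by (simp add: noise_sq_var_def)
qed

end

section \<open>The stable AR(1) noise\<close>

definition lag :: "nat \<Rightarrow> nat \<Rightarrow> nat" where "lag s t = (if s \<le> t then t - s else s - t)"

lemma lag_sym: "lag s t = lag t s" by (simp add: lag_def)

lemma sum_power_inj_le:
  fixes q :: real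
  assumes "finite A" "inj_on h A" "0 \<le> q" "q < 1"
  shows "(\<Sum>t\<in>A. q ^ h t) \<le> 1 / (1 - q)"
proof -
  have "(\<Sum>t\<in>A. q ^ h t) = (\<Sum>k\<in>h ` A. q ^ k)" using assms by (simp add: sum.reindex)
  also have "\<dots> \<le> (\<Sum>k. q ^ k)"
    using assms by (intro sum_le_suminf summable_geometric) auto
  also have "\<dots> = 1 / (1 - q)" using assms by (simp add: suminf_geometric)
  finally show ?thesis .
qed

lemma sum_power_lag_le:
  fixes q :: real
  assumes fin: "finite I" and q: "0 \<le> q" "q < 1"
  shows "(\<Sum>t\<in>I. q ^ lag s t) \<le> 2 / (1 - q)"
proof -
  define A where "A = {t\<in>I. t \<le> s}"
  define B where "B = {t\<in>I. \<not> t \<le> s}"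
  have I: "I = A \<union> B" "A \<inter> B = {}" "finite A" "finite B" using fin by (auto simp: A_def B_def)
  have "(\<Sum>t\<in>I. q ^ lag s t) = (\<Sum>t\<in>A. q ^ lag s t) + (\<Sum>t\<in>B. q ^ lag s t)"
    using I by (simp add: sum.union_disjoint)
  also have "(\<Sum>t\<in>A. q ^ lag s t) = (\<Sum>t\<in>A. q ^ (s - t))"
    by (intro sum.cong) (auto simp: A_def lag_def)
  also have "\<dots> \<le> 1 / (1 - q)"
    using I q by (intro sum_power_inj_le) (auto simp: inj_on_def A_def)
  also have "(\<Sum>t\<in>B. q ^ lag s t) = (\<Sum>t\<in>B. q ^ (t - s))"
    by (intro sum.cong) (auto simp: B_def lag_def)
  also have "\<dots> \<le> 1 / (1 - q)"
    using I q by (intro sum_power_inj_le) (auto simp: inj_on_def B_def)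
  finally show ?thesis by simp
qed

lemma quadratic_form_decaying_le:
  fixes w :: "nat \<Rightarrow> real" and C :: "nat \<Rightarrow> nat \<Rightarrow> real"
  assumes fin: "finite I" and q: "0 \<le> q" "q < 1" and K: "0 \<le> K"
    and C: "\<And>s t. \<bar>C s t\<bar> \<le> K * q ^ lag s t"
  shows "(\<Sum>s\<in>I. \<Sum>t\<in>I. w s * w t * C s t) \<le> K * (2 / (1 - q)) * (\<Sum>s\<in>I. (w s)\<^sup>2)"
proof -
  have "(\<Sum>s\<in>I. \<Sum>t\<in>I. w s * w t * C s t) \<le> (\<Sum>s\<in>I. \<Sum>t\<in>I. ((w s)\<^sup>2 + (w t)\<^sup>2) / 2 * (K * q ^ lag s t))"
  proof (intro sum_mono)
    fix s t
    have "w s * w t * C s t \<le> \<bar>w s * w t\<bar> * \<bar>C s t\<bar>" by (simp add: abs_mult[symmetric])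
    also have "\<dots> \<le> ((w s)\<^sup>2 + (w t)\<^sup>2) / 2 * (K * q ^ lag s t)"
    proof (intro mult_mono C)
      show "\<bar>w s * w t\<bar> \<le> ((w s)\<^sup>2 + (w t)\<^sup>2) / 2"
        using sum_squares_bound[of "\<bar>w s\<bar>" "\<bar>w t\<bar>"] by (simp add: abs_mult)
    qed auto
    finally show "w s * w t * C s t \<le> ((w s)\<^sup>2 + (w t)\<^sup>2) / 2 * (K * q ^ lag s t)" .
  qed
  also have "\<dots> = K / 2 * ((\<Sum>s\<in>I. \<Sum>t\<in>I. (w s)\<^sup>2 * q ^ lag s t) + (\<Sum>s\<in>I. \<Sum>t\<in>I. (w t)\<^sup>2 * q ^ lag s t))"
    by (simp add: sum_distrib_left sum.distrib algebra_simps add_divide_distrib)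
  also have "(\<Sum>s\<in>I. \<Sum>t\<in>I. (w t)\<^sup>2 * q ^ lag s t) = (\<Sum>s\<in>I. \<Sum>t\<in>I. (w s)\<^sup>2 * q ^ lag s t)"
    by (subst sum.swap) (simp add: lag_sym)
  also have "K / 2 * ((\<Sum>s\<in>I. \<Sum>t\<in>I. (w s)\<^sup>2 * q ^ lag s t) + (\<Sum>s\<in>I. \<Sum>t\<in>I. (w s)\<^sup>2 * q ^ lag s t))
      = K * (\<Sum>s\<in>I. (w s)\<^sup>2 * (\<Sum>t\<in>I. q ^ lag s t))"
    by (simp add: sum_distrib_left)
  also have "\<dots> \<le> K * (\<Sum>s\<in>I. (w s)\<^sup>2 * (2 / (1 - q)))"
    using K by (intro mult_left_mono sum_mono mult_left_mono sum_power_lag_le fin q) auto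
  also have "\<dots> = K * (2 / (1 - q)) * (\<Sum>s\<in>I. (w s)\<^sup>2)"
    by (simp add: sum_distrib_left sum_distrib_right sum_divide_distrib algebra_simps)
  finally show ?thesis .
qed

locale stable_ar = gaussian_noise +
  fixes r :: real
  assumes r: "\<bar>r\<bar> < 1"
begin

definition u :: "nat \<Rightarrow> 'a \<Rightarrow> real" where "u t \<omega> = ar_filter r (\<lambda>s. \<epsilon> s \<omega>) t"

lemma u_0[simp]: "u 0 \<omega> = 0" and u_Suc: "u (Suc t) \<omega> = r * u t \<omega> + \<epsilon> (Suc t) \<omega>"
  by (simp_all add: u_def)

lemma determined_before_u: "determined_before (Suc t) (u t)"
proof (induction t)
  case 0 show ?case using determined_before_const[of 1 0] by (simp add: u_def)
next
  case (Suc t)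
  have "determined_before (Suc (Suc t)) (\<lambda>\<omega>. r * u t \<omega> + \<epsilon> (Suc t) \<omega>)"
    by (intro determined_before_add determined_before_scale determined_before_mono[OF Suc] determined_before_noise) auto
  thus ?case by (simp add: u_Suc)
qed

lemma finite_moments_u: "finite_moments (u t)"
proof (induction t)
  case 0 show ?case using finite_moments_const[of 0] by (simp add: u_def)
next
  case (Suc t)
  have "finite_moments (\<lambda>\<omega>. r * u t \<omega> + \<epsilon> (Suc t) \<omega>)" by (intro finite_moments_add finite_moments_scale Suc finite_moments_noise) auto
  thus ?case by (simp add: u_Suc)
qed

lemma integral_u: "(\<integral>\<omega>. u t \<omega> \<partial>M) = 0"
proof (induction t)
  case 0 show ?case by (simp add: u_def)
next
  case (Suc t)
  have "(\<integral>\<omega>. u (Suc t) \<omega> \<partial>M) = r * (\<integral>\<omega>. u t \<omega> \<partial>M) + (\<integral>\<omega>. \<epsilon> (Suc t) \<omega> \<partial>M)"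
    unfolding u_Suc by (subst Bochner_Integration.integral_add)
      (auto intro!: finite_moments_integrable finite_moments_scale finite_moments_u finite_moments_noise)
  thus ?case using Suc integral_noise[of "Suc t"] by simp
qed

definition v :: "nat \<Rightarrow> real" where "v t = (\<integral>\<omega>. (u t \<omega>)\<^sup>2 \<partial>M)"

lemma v_0: "v 0 = 0" by (simp add: v_def)

lemma v_Suc: "v (Suc t) = r\<^sup>2 * v t + \<sigma>\<^sup>2"
proof -
  have "v (Suc t) = (\<integral>\<omega>. r\<^sup>2 * (u t \<omega>)\<^sup>2 + 2 * r * (\<epsilon> (Suc t) \<omega> * u t \<omega>) + (\<epsilon> (Suc t) \<omega>)\<^sup>2 \<partial>M)"
    by (simp add: v_def u_Suc power2_eq_square algebra_simps)
  also have "\<dots> = r\<^sup>2 * (\<integral>\<omega>. (u t \<omega>)\<^sup>2 \<partial>M) + 2 * r * (\<integral>\<omega>. \<epsilon> (Suc t) \<omega> * u t \<omega> \<partial>M) + (\<integral>\<omega>. (\<epsilon> (Suc t) \<omega>)\<^sup>2 \<partial>M)"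
    by (subst Bochner_Integration.integral_add Bochner_Integration.integral_mult_right
        | intro Bochner_Integration.integrable_add Bochner_Integration.integrable_mult_right
          finite_moments_integrable finite_moments_power finite_moments_mult finite_moments_u finite_moments_noise | simp)+
  also have "(\<integral>\<omega>. \<epsilon> (Suc t) \<omega> * u t \<omega> \<partial>M) = 0" by (intro integral_noise_mult_eq_0 determined_before_u finite_moments_u) auto
  also have "(\<integral>\<omega>. (\<epsilon> (Suc t) \<omega>)\<^sup>2 \<partial>M) = \<sigma>\<^sup>2" by (intro integral_noise_sq) auto
  finally show ?thesis by (simp add: v_def)
qed

definition stat_var where "stat_var = \<sigma>\<^sup>2 / (1 - r\<^sup>2)"

lemma r_sq_less_1: "r\<^sup>2 < 1" using r by (simp add: abs_square_less_1)

lemma stat_var_nonneg: "0 \<le> stat_var" using r_sq_less_1 by (simp add: stat_var_def)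

lemma v_nonneg: "0 \<le> v t" by (simp add: v_def)

lemma v_le: "v t \<le> stat_var"
proof (induction t)
  case 0 thus ?case using stat_var_nonneg by (simp add: v_0)
next
  case (Suc t)
  have "v (Suc t) \<le> r\<^sup>2 * stat_var + \<sigma>\<^sup>2" unfolding v_Suc by (intro add_mono mult_left_mono Suc) auto
  also have "\<dots> = stat_var" using r_sq_less_1 by (simp add: stat_var_def field_simps)
  finally show ?case .
qed

lemma cov_u: "(\<integral>\<omega>. u a \<omega> * u (a + k) \<omega> \<partial>M) = r ^ k * v a"
proof (induction k)
  case 0 thus ?case by (simp add: v_def power2_eq_square)
next
  case (Suc k)
  have "(\<integral>\<omega>. u a \<omega> * u (a + Suc k) \<omega> \<partial>M)
      = (\<integral>\<omega>. r * (u a \<omega> * u (a + k) \<omega>) + \<epsilon> (Suc (a + k)) \<omega> * u a \<omega> \<partial>M)"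
    by (simp add: u_Suc algebra_simps)
  also have "\<dots> = r * (\<integral>\<omega>. u a \<omega> * u (a + k) \<omega> \<partial>M) + (\<integral>\<omega>. \<epsilon> (Suc (a + k)) \<omega> * u a \<omega> \<partial>M)"
    by (subst Bochner_Integration.integral_add)
       (auto intro!: finite_moments_integrable finite_moments_mult finite_moments_scale finite_moments_u finite_moments_noise)
  also have "(\<integral>\<omega>. \<epsilon> (Suc (a + k)) \<omega> * u a \<omega> \<partial>M) = 0"
    by (intro integral_noise_mult_eq_0 finite_moments_u determined_before_mono[OF determined_before_u]) auto
  finally show ?case by (simp add: Suc)
qed

lemma abs_cov_u_le: "\<bar>\<integral>\<omega>. u s \<omega> * u t \<omega> \<partial>M\<bar> \<le> stat_var * \<bar>r\<bar> ^ lag s t"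
proof (cases "s \<le> t")
  case True
  have "\<bar>\<integral>\<omega>. u s \<omega> * u t \<omega> \<partial>M\<bar> = \<bar>r ^ (t - s) * v s\<bar>"
    using cov_u[of s "t - s"] True by simp
  also have "\<dots> \<le> \<bar>r\<bar> ^ (t - s) * stat_var"
    using v_nonneg[of s] v_le[of s] by (simp add: abs_mult power_abs mult_left_mono)
  finally show ?thesis using True by (simp add: lag_def mult.commute)
next
  case False
  have "\<bar>\<integral>\<omega>. u s \<omega> * u t \<omega> \<partial>M\<bar> = \<bar>r ^ (s - t) * v t\<bar>"
    using cov_u[of t "s - t"] False by (simp add: mult.commute)
  also have "\<dots> \<le> \<bar>r\<bar> ^ (s - t) * stat_var"
    using v_nonneg[of t] v_le[of t] by (simp add: abs_mult power_abs mult_left_mono)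
  finally show ?thesis using False by (simp add: lag_def mult.commute)
qed

lemma AE_avg_u_weighted:
  fixes w :: "nat \<Rightarrow> real"
  assumes wb: "\<And>n. (\<Sum>t<n. (w t)\<^sup>2) \<le> B * real n"
  shows "AE \<omega> in M. (\<lambda>n. (\<Sum>t<n. u t \<omega> * w t) / real n) \<longlonglongrightarrow> 0"
proof -
  define L where "L = stat_var * (2 / (1 - \<bar>r\<bar>))"
  have L0: "0 \<le> L" using stat_var_nonneg r by (simp add: L_def)
  define S where "S n \<omega> = (\<Sum>t<n. u t \<omega> * w t)" for n \<omega>
  define V where "V n = L * (\<Sum>t<n. (w t)\<^sup>2)" for n
  have Ymom: "finite_moments (\<lambda>\<omega>. u t \<omega> * w t)" for t by (intro finite_moments_mult finite_moments_u finite_moments_const)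
  have Smom: "finite_moments (S n)" for n unfolding S_def by (intro finite_moments_sum Ymom)
  have diff: "S n \<omega> - S m \<omega> = (\<Sum>t\<in>{m..<n}. u t \<omega> * w t)" if "m \<le> n" for m n \<omega>
    using sum_diff_nat_ivl[of 0 m n "\<lambda>t. u t \<omega> * w t"] that by (simp add: S_def lessThan_atLeast0)
  have diffV: "V n - V m = L * (\<Sum>t\<in>{m..<n}. (w t)\<^sup>2)" if "m \<le> n" for m n
    using sum_diff_nat_ivl[of 0 m n "\<lambda>t. (w t)\<^sup>2"] that by (simp add: V_def lessThan_atLeast0 right_diff_distrib[symmetric])
  have "AE \<omega> in M. (\<lambda>n. S n \<omega> / real n) \<longlonglongrightarrow> 0"
  proof (rule AE_avg_tendsto_0_of_L2_increments[where V = V and D = "L * B"])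
    show "S n \<in> borel_measurable M" for n by (rule finite_moments_measurable[OF Smom])
    show "integrable M (\<lambda>\<omega>. (S n \<omega> - S m \<omega>)\<^sup>2)" for m n
      by (intro finite_moments_integrable finite_moments_power finite_moments_diff Smom)
    show "S 0 \<omega> = 0" for \<omega> by (simp add: S_def)
    show "(\<integral>\<omega>. (S n \<omega> - S m \<omega>)\<^sup>2 \<partial>M) \<le> V n - V m" if "m \<le> n" for m n
    proof -
      have "(\<integral>\<omega>. (S n \<omega> - S m \<omega>)\<^sup>2 \<partial>M) = (\<integral>\<omega>. (\<Sum>t\<in>{m..<n}. u t \<omega> * w t)\<^sup>2 \<partial>M)"
        using diff[OF that] by simp
      also have "\<dots> = (\<Sum>s\<in>{m..<n}. \<Sum>t\<in>{m..<n}. \<integral>\<omega>. (u s \<omega> * w s) * (u t \<omega> * w t) \<partial>M)"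
        by (rule integral_sum_sq) (rule Ymom)
      also have "\<dots> = (\<Sum>s\<in>{m..<n}. \<Sum>t\<in>{m..<n}. w s * w t * (\<integral>\<omega>. u s \<omega> * u t \<omega> \<partial>M))"
        by (intro sum.cong refl) (simp add: algebra_simps)
      also have "\<dots> \<le> stat_var * (2 / (1 - \<bar>r\<bar>)) * (\<Sum>s\<in>{m..<n}. (w s)\<^sup>2)"
        by (rule quadratic_form_decaying_le) (use r stat_var_nonneg abs_cov_u_le in auto)
      also have "\<dots> = V n - V m" by (simp add: diffV[OF that] L_def)
      finally show ?thesis .
    qed
    show "mono V" unfolding V_def by (intro monoI mult_left_mono sum_mono2 L0) auto
    show "V n \<le> L * B * real n" for n using mult_left_mono[OF wb L0] by (simp add: V_def mult.assoc)
  qed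
  thus ?thesis by (simp add: S_def)
qed

lemma AE_avg_noise_sq_centered: "AE \<omega> in M. (\<lambda>n. (\<Sum>t<n. (\<epsilon> (Suc t) \<omega>)\<^sup>2 - \<sigma>\<^sup>2) / real n) \<longlonglongrightarrow> 0"
proof (rule AE_avg_tendsto_0_orthogonal[where D = noise_sq_var])
  show "finite_moments (\<lambda>\<omega>. (\<epsilon> (Suc t) \<omega>)\<^sup>2 - \<sigma>\<^sup>2)" for t by (intro finite_moments_diff finite_moments_power finite_moments_noise finite_moments_const) simp
  show "(\<integral>\<omega>. ((\<epsilon> (Suc s) \<omega>)\<^sup>2 - \<sigma>\<^sup>2) * ((\<epsilon> (Suc t) \<omega>)\<^sup>2 - \<sigma>\<^sup>2) \<partial>M) = 0" if st: "s < t" for s t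
  proof -
    define F where "F \<omega> = (\<epsilon> (Suc s) \<omega>)\<^sup>2 - \<sigma>\<^sup>2" for \<omega>
    have Fp: "determined_before (Suc t) F" unfolding F_def using st by (intro determined_before_diff determined_before_power determined_before_noise determined_before_const) auto
    have Fm: "finite_moments F" unfolding F_def by (intro finite_moments_diff finite_moments_power finite_moments_noise finite_moments_const) simp
    have "(\<integral>\<omega>. F \<omega> * ((\<epsilon> (Suc t) \<omega>)\<^sup>2 - \<sigma>\<^sup>2) \<partial>M)
        = (\<integral>\<omega>. (\<epsilon> (Suc t) \<omega>)\<^sup>2 * F \<omega> - \<sigma>\<^sup>2 * F \<omega> \<partial>M)"
      by (simp add: algebra_simps)
    also have "\<dots> = (\<integral>\<omega>. (\<epsilon> (Suc t) \<omega>)\<^sup>2 * F \<omega> \<partial>M) - \<sigma>\<^sup>2 * (\<integral>\<omega>. F \<omega> \<partial>M)"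
      by (subst Bochner_Integration.integral_diff)
         (auto intro!: finite_moments_integrable finite_moments_mult finite_moments_scale finite_moments_power finite_moments_noise Fm)
    also have "\<dots> = 0" using integral_noise_sq_mult[OF _ Fp Fm] by simp
    finally show ?thesis by (simp add: F_def)
  qed
  show "(\<Sum>t<n. \<integral>\<omega>. ((\<epsilon> (Suc t) \<omega>)\<^sup>2 - \<sigma>\<^sup>2)\<^sup>2 \<partial>M) \<le> noise_sq_var * real n" for n
    by (simp add: integral_centered_noise_sq_sq)
qed

lemma AE_avg_noise_u: "AE \<omega> in M. (\<lambda>n. (\<Sum>t<n. \<epsilon> (Suc t) \<omega> * u t \<omega>) / real n) \<longlonglongrightarrow> 0"
proof (rule AE_avg_tendsto_0_orthogonal[where D = "\<sigma>\<^sup>2 * stat_var"])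
  show "finite_moments (\<lambda>\<omega>. \<epsilon> (Suc t) \<omega> * u t \<omega>)" for t by (intro finite_moments_mult finite_moments_noise finite_moments_u) simp
  show "(\<integral>\<omega>. (\<epsilon> (Suc s) \<omega> * u s \<omega>) * (\<epsilon> (Suc t) \<omega> * u t \<omega>) \<partial>M) = 0" if st: "s < t" for s t
  proof -
    define F where "F \<omega> = u t \<omega> * (\<epsilon> (Suc s) \<omega> * u s \<omega>)" for \<omega>
    have Fp: "determined_before (Suc t) F" unfolding F_def using st
      by (intro determined_before_mult determined_before_u determined_before_noise determined_before_mono[OF determined_before_u]) auto
    have Fm: "finite_moments F" unfolding F_def by (intro finite_moments_mult finite_moments_noise finite_moments_u) simp
    have "(\<integral>\<omega>. (\<epsilon> (Suc s) \<omega> * u s \<omega>) * (\<epsilon> (Suc t) \<omega> * u t \<omega>) \<partial>M) = (\<integral>\<omega>. \<epsilon> (Suc t) \<omega> * F \<omega> \<partial>M)"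
      by (simp add: F_def algebra_simps)
    also have "\<dots> = 0" by (intro integral_noise_mult_eq_0 Fp Fm) simp
    finally show ?thesis .
  qed
  show "(\<Sum>t<n. \<integral>\<omega>. (\<epsilon> (Suc t) \<omega> * u t \<omega>)\<^sup>2 \<partial>M) \<le> \<sigma>\<^sup>2 * stat_var * real n" for n
  proof -
    have "(\<integral>\<omega>. (\<epsilon> (Suc t) \<omega> * u t \<omega>)\<^sup>2 \<partial>M) \<le> \<sigma>\<^sup>2 * stat_var" for t
    proof -
      have "(\<integral>\<omega>. (\<epsilon> (Suc t) \<omega> * u t \<omega>)\<^sup>2 \<partial>M) = (\<integral>\<omega>. (\<epsilon> (Suc t) \<omega>)\<^sup>2 * (u t \<omega>)\<^sup>2 \<partial>M)"
        by (simp add: power_mult_distrib)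
      also have "\<dots> = \<sigma>\<^sup>2 * v t" unfolding v_def
        by (intro integral_noise_sq_mult determined_before_power determined_before_u finite_moments_power finite_moments_u) simp
      also have "\<dots> \<le> \<sigma>\<^sup>2 * stat_var" by (intro mult_left_mono v_le) simp
      finally show ?thesis .
    qed
    hence "(\<Sum>t<n. \<integral>\<omega>. (\<epsilon> (Suc t) \<omega> * u t \<omega>)\<^sup>2 \<partial>M) \<le> (\<Sum>t<n. \<sigma>\<^sup>2 * stat_var)" by (intro sum_mono)
    thus ?thesis by (simp add: mult.commute)
  qed
qed

lemma AE_avg_noise_weighted:
  fixes w :: "nat \<Rightarrow> real"
  assumes wb: "\<And>n. (\<Sum>t<n. (w t)\<^sup>2) \<le> B * real n"
  shows "AE \<omega> in M. (\<lambda>n. (\<Sum>t<n. \<epsilon> (Suc t) \<omega> * w t) / real n) \<longlonglongrightarrow> 0"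
proof (rule AE_avg_tendsto_0_orthogonal[where D = "\<sigma>\<^sup>2 * B"])
  show "finite_moments (\<lambda>\<omega>. \<epsilon> (Suc t) \<omega> * w t)" for t by (intro finite_moments_mult finite_moments_noise finite_moments_const) simp
  show "(\<integral>\<omega>. (\<epsilon> (Suc s) \<omega> * w s) * (\<epsilon> (Suc t) \<omega> * w t) \<partial>M) = 0" if st: "s < t" for s t
  proof -
    define F where "F \<omega> = w t * (\<epsilon> (Suc s) \<omega> * w s)" for \<omega>
    have Fp: "determined_before (Suc t) F" unfolding F_def using st
      by (intro determined_before_mult determined_before_const determined_before_noise) auto
    have Fm: "finite_moments F" unfolding F_def by (intro finite_moments_mult finite_moments_noise finite_moments_const) simp
    have "(\<integral>\<omega>. (\<epsilon> (Suc s) \<omega> * w s) * (\<epsilon> (Suc t) \<omega> * w t) \<partial>M) = (\<integral>\<omega>. \<epsilon> (Suc t) \<omega> * F \<omega> \<partial>M)"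
      by (simp add: F_def algebra_simps)
    also have "\<dots> = 0" by (intro integral_noise_mult_eq_0 Fp Fm) simp
    finally show ?thesis .
  qed
  show "(\<Sum>t<n. \<integral>\<omega>. (\<epsilon> (Suc t) \<omega> * w t)\<^sup>2 \<partial>M) \<le> \<sigma>\<^sup>2 * B * real n" for n
  proof -
    have "(\<integral>\<omega>. (\<epsilon> (Suc t) \<omega> * w t)\<^sup>2 \<partial>M) = \<sigma>\<^sup>2 * (w t)\<^sup>2" for t
      using integral_noise_sq[of "Suc t"] by (simp add: power_mult_distrib)
    hence "(\<Sum>t<n. \<integral>\<omega>. (\<epsilon> (Suc t) \<omega> * w t)\<^sup>2 \<partial>M) = \<sigma>\<^sup>2 * (\<Sum>t<n. (w t)\<^sup>2)"
      by (simp add: sum_distrib_left)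
    also have "\<dots> \<le> \<sigma>\<^sup>2 * (B * real n)" by (intro mult_left_mono wb) simp
    finally show ?thesis by simp
  qed
qed


lemma AE_avg_noise_sq: "AE \<omega> in M. (\<lambda>n. (\<Sum>t<n. (\<epsilon> (Suc t) \<omega>)\<^sup>2) / real n) \<longlonglongrightarrow> \<sigma>\<^sup>2"
  using AE_avg_noise_sq_centered
proof eventually_elim
  case (elim \<omega>)
  have "(\<lambda>n. (\<Sum>t<n. (\<epsilon> (Suc t) \<omega>)\<^sup>2 - \<sigma>\<^sup>2) / real n + \<sigma>\<^sup>2) \<longlonglongrightarrow> \<sigma>\<^sup>2"
    using tendsto_add[OF elim tendsto_const[of "\<sigma>\<^sup>2"]] by simp
  thus ?case by (rule LIMSEQ_cong_pos) (simp add: sum_subtractf field_simps)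
qed

lemma AE_avg_u_sq: "AE \<omega> in M. (\<lambda>n. (\<Sum>t<n. (u t \<omega>)\<^sup>2) / real n) \<longlonglongrightarrow> stat_var"
  using AE_avg_noise_sq AE_avg_noise_u
proof eventually_elim
  case (elim \<omega>)
  have "(\<lambda>n. (\<Sum>t<n. ar_filter r (\<lambda>s. \<epsilon> s \<omega>) t * \<epsilon> (Suc t) \<omega>) / real n) \<longlonglongrightarrow> 0"
    using elim(2) by (simp add: u_def mult.commute)
  from avg_ar_filter_sq_tendsto[OF r elim(1) this] show ?case by (simp add: u_def stat_var_def)
qed
end

section \<open>The AR model with regressors\<close>

lemma tendsto_avg_matrix_entry:
  fixes F :: "nat \<Rightarrow> real^'n^'m"
  assumes "(\<lambda>n. F n /\<^sub>R real n) \<longlonglongrightarrow> L"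
  shows "(\<lambda>n. (F n $ i $ j) / real n) \<longlonglongrightarrow> L $ i $ j"
proof -
  have "(\<lambda>n. (F n /\<^sub>R real n) $ i $ j) \<longlonglongrightarrow> L $ i $ j"
    by (intro tendsto_vec_nth assms)
  thus ?thesis by (simp add: divide_inverse mult.commute)
qed

lemma linear_bound_of_convergent_avg:
  fixes f :: "nat \<Rightarrow> real"
  assumes "(\<lambda>n. f n / real n) \<longlonglongrightarrow> L" and nn: "\<And>n. 0 \<le> f n" and f0: "f 0 = 0"
  shows "\<exists>B\<ge>0. \<forall>n. f n \<le> B * real n"
proof -
  obtain K where K: "K > 0" "\<And>n. norm (f n / real n) \<le> K"
    using convergent_imp_Bseq[OF convergentI[OF assms(1)]] by (auto simp: Bseq_def)
  have "f n \<le> K * real n" for n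
  proof (cases "n = 0")
    case False
    hence "f n / real n \<le> K" using K(2)[of n] nn[of n] by simp
    thus ?thesis using False by (simp add: divide_le_eq mult.commute)
  qed (simp add: f0)
  thus ?thesis using K by (intro exI[of _ K]) auto
qed

lemma fdens_pos: "0 < s \<Longrightarrow> 0 < fdens z (\<rho>, \<beta>, s) n xs"
  unfolding fdens_def prod.case by (intro prod_pos) simp

lemma ln_fdens:
  assumes s: "0 < s"
  shows "ln (fdens z (\<rho>, \<beta>, s) n xs)
    = (\<Sum>t<n. - (1/2) * ln (2 * pi * s\<^sup>2) - (xs (Suc t) - \<rho> * xs t - z (Suc t) \<bullet> \<beta>)\<^sup>2 / (2 * s\<^sup>2))"
proof -
  have "ln (fdens z (\<rho>, \<beta>, s) n xs) = (\<Sum>t\<in>{1..n}. ln ((2 * pi * s\<^sup>2) powr (-1/2) *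
        exp (- (xs t - \<rho> * xs (t - 1) - z t \<bullet> \<beta>)\<^sup>2 / (2 * s\<^sup>2))))"
    unfolding fdens_def prod.case using s by (intro ln_prod) auto
  also have "\<dots> = (\<Sum>t\<in>{1..n}. - (1/2) * ln (2 * pi * s\<^sup>2) - (xs t - \<rho> * xs (t - 1) - z t \<bullet> \<beta>)\<^sup>2 / (2 * s\<^sup>2))"
    using s by (intro sum.cong refl) (simp add: ln_mult)
  also have "\<dots> = (\<Sum>t<n. - (1/2) * ln (2 * pi * s\<^sup>2) - (xs (Suc t) - \<rho> * xs t - z (Suc t) \<bullet> \<beta>)\<^sup>2 / (2 * s\<^sup>2))"
    by (simp add: sum.atLeast1_atMost_eq)
  finally show ?thesis .
qed

lemma ln_Rn:
  assumes "0 < s" "0 < s0"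
  shows "ln (Rn z (\<rho>0, \<beta>0, s0) (\<rho>, \<beta>, s) n xs) = ln (fdens z (\<rho>, \<beta>, s) n xs) - ln (fdens z (\<rho>0, \<beta>0, s0) n xs)"
  unfolding Rn_def using fdens_pos[OF assms(1), of z \<rho> \<beta> n xs] fdens_pos[OF assms(2), of z \<rho>0 \<beta>0 n xs]
  by (simp add: ln_div)

lemma uniform_limitI_majorant:
  fixes f :: "nat \<Rightarrow> 'b \<Rightarrow> real"
  assumes bnd: "\<And>n \<theta>. n > 0 \<Longrightarrow> \<theta> \<in> K \<Longrightarrow> \<bar>f n \<theta> - g \<theta>\<bar> \<le> B n" and B: "B \<longlonglongrightarrow> 0"
  shows "uniform_limit K f g sequentially"
proof (rule uniform_limitI)
  fix e :: real assume e: "0 < e"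
  have "eventually (\<lambda>n. B n < e) sequentially" using B e by (auto dest: order_tendstoD(2))
  thus "eventually (\<lambda>n. \<forall>\<theta>\<in>K. dist (f n \<theta>) (g \<theta>) < e) sequentially"
    using eventually_gt_at_top[of 0]
  proof eventually_elim
    case (elim n)
    show ?case using bnd[of n] elim by (auto simp: dist_real_def intro: le_less_trans)
  qed
qed

locale ar_model = stable_ar M \<epsilon> \<sigma> r for M :: "'a measure" and \<epsilon> \<sigma> r +
  fixes z :: "nat \<Rightarrow> real^'m::finite" and b :: "real^'m" and Sz :: "real^'m^'m" and C :: real
  assumes B1b: "\<And>k. k \<ge> 1 \<Longrightarrow>
       (\<lambda>n. (\<Sum>t=1..n. (\<chi> i j. z (t + k) $ i * z t $ j)) /\<^sub>R real n) \<longlonglongrightarrow> 0"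
    and B1c: "(\<lambda>n. (\<Sum>t=1..n. (\<chi> i j. z t $ i * z t $ j)) /\<^sub>R real n) \<longlonglongrightarrow> Sz"
    and B2: "\<And>t. t \<ge> 1 \<Longrightarrow> \<bar>z t \<bullet> b\<bar> < C"
begin

definition a :: "nat \<Rightarrow> real" where "a s = z s \<bullet> b"
definition m :: "nat \<Rightarrow> real" where "m t = ar_filter r a t"

lemma avg_regressor_products: "(\<lambda>n. (\<Sum>t<n. z (Suc t) $ i * z (Suc t) $ j) / real n) \<longlonglongrightarrow> Sz $ i $ j"
  using tendsto_avg_matrix_entry[OF B1c, of i j] by (simp add: sum.atLeast1_atMost_eq)

lemma avg_lagged_regressor_products: "k \<ge> 1 \<Longrightarrow> (\<lambda>n. (\<Sum>t<n. z (Suc t + k) $ i * z (Suc t) $ j) / real n) \<longlonglongrightarrow> 0"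
  using tendsto_avg_matrix_entry[OF B1b, of k i j] by (simp add: sum.atLeast1_atMost_eq)

lemma sum_regressor_sq_le: "\<exists>B\<ge>0. \<forall>n. (\<Sum>t<n. (z (Suc t) $ i)\<^sup>2) \<le> B * real n"
  using linear_bound_of_convergent_avg[OF avg_regressor_products[of i i]] by (simp add: power2_eq_square sum_nonneg)

definition drift_sq_lim where "drift_sq_lim = (\<Sum>i\<in>UNIV. \<Sum>j\<in>UNIV. b $ i * b $ j * Sz $ i $ j)"

lemma a_mult_eq_sum: "a s * c = (\<Sum>j\<in>UNIV. b $ j * (z s $ j * c))"
  by (simp add: a_def inner_vec_def sum_distrib_left mult.assoc mult.commute mult.left_commute)

lemma mult_a_eq_sum: "c * a s = (\<Sum>j\<in>UNIV. b $ j * (c * z s $ j))"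
  by (simp add: a_def inner_vec_def sum_distrib_left mult.assoc mult.commute mult.left_commute)

lemma avg_drift_sq: "(\<lambda>n. (\<Sum>t<n. (a (Suc t))\<^sup>2) / real n) \<longlonglongrightarrow> drift_sq_lim"
proof -
  have e: "(\<Sum>t<n. (a (Suc t))\<^sup>2) / real n
      = (\<Sum>i\<in>UNIV. \<Sum>j\<in>UNIV. b $ i * b $ j * ((\<Sum>t<n. z (Suc t) $ i * z (Suc t) $ j) / real n))" for n
    by (simp add: a_def inner_vec_def power2_eq_square sum_distrib_left sum_distrib_right
        sum_divide_distrib algebra_simps sum.swap[of _ "{..<n}"])
  show ?thesis unfolding e drift_sq_lim_def by (intro tendsto_intros avg_regressor_products)
qed

lemma abs_a_le: "s \<ge> 1 \<Longrightarrow> \<bar>a s\<bar> \<le> C"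
  using B2 by (simp add: a_def less_imp_le)

lemma C_nonneg: "0 \<le> C" using abs_a_le[of 1] by simp

lemma abs_m_le: "\<bar>m t\<bar> \<le> C / (1 - \<bar>r\<bar>)"
  unfolding m_def by (rule abs_ar_filter_le[OF abs_a_le r])

lemma sum_m_sq_le: "(\<Sum>t<n. (m t)\<^sup>2) \<le> (C / (1 - \<bar>r\<bar>))\<^sup>2 * real n"
proof -
  have "(m t)\<^sup>2 \<le> (C / (1 - \<bar>r\<bar>))\<^sup>2" for t
    using power_mono[OF abs_m_le[of t] abs_ge_zero, of 2] by simp
  hence "(\<Sum>t<n. (m t)\<^sup>2) \<le> (\<Sum>t<n. (C / (1 - \<bar>r\<bar>))\<^sup>2)" by (intro sum_mono)
  thus ?thesis by (simp add: mult.commute)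
qed

lemma sum_a_sq_le: "(\<Sum>t<n. (a (Suc t))\<^sup>2) \<le> C\<^sup>2 * real n"
proof -
  have "(a (Suc t))\<^sup>2 \<le> C\<^sup>2" for t
    using abs_a_le[of "Suc t"] C_nonneg abs_le_square_iff[of "a (Suc t)" C] by simp
  hence "(\<Sum>t<n. (a (Suc t))\<^sup>2) \<le> (\<Sum>t<n. C\<^sup>2)" by (intro sum_mono)
  thus ?thesis by (simp add: mult.commute)
qed

lemma avg_a_lagged_regressor: "j \<ge> 1 \<Longrightarrow> (\<lambda>n. (\<Sum>t<n. a (Suc t) * z (Suc t + j) $ i) / real n) \<longlonglongrightarrow> 0"
proof -
  assume j: "j \<ge> 1"
  have e: "(\<Sum>t<n. a (Suc t) * z (Suc t + j) $ i) / real n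
     = (\<Sum>l\<in>UNIV. b $ l * ((\<Sum>t<n. z (Suc t + j) $ i * z (Suc t) $ l) / real n))" for n
    by (simp add: a_mult_eq_sum sum_divide_distrib sum_distrib_left sum.swap[of _ "{..<n}"] algebra_simps)
  have "(\<lambda>n. \<Sum>l\<in>UNIV. b $ l * ((\<Sum>t<n. z (Suc t + j) $ i * z (Suc t) $ l) / real n)) \<longlonglongrightarrow> (\<Sum>l\<in>UNIV. b $ l * 0)"
    by (intro tendsto_sum tendsto_mult tendsto_const avg_lagged_regressor_products j)
  thus ?thesis unfolding e by simp
qed

lemma avg_a_lagged: "j \<ge> 1 \<Longrightarrow> (\<lambda>n. (\<Sum>t<n. a (Suc t) * a (Suc t + j)) / real n) \<longlonglongrightarrow> 0"
proof -
  assume j: "j \<ge> 1"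
  have e: "(\<Sum>t<n. a (Suc t) * a (Suc t + j)) / real n
     = (\<Sum>l\<in>UNIV. b $ l * ((\<Sum>t<n. a (Suc t) * z (Suc t + j) $ l) / real n))" for n
    by (simp add: mult_a_eq_sum sum_divide_distrib sum_distrib_left sum.swap[of _ "{..<n}"] algebra_simps)
  have "(\<lambda>n. \<Sum>l\<in>UNIV. b $ l * ((\<Sum>t<n. a (Suc t) * z (Suc t + j) $ l) / real n)) \<longlonglongrightarrow> (\<Sum>l\<in>UNIV. b $ l * 0)"
    by (intro tendsto_sum tendsto_mult tendsto_const avg_a_lagged_regressor j)
  thus ?thesis unfolding e by simp
qed

lemma avg_m_sq: "(\<lambda>n. (\<Sum>t<n. (m t)\<^sup>2) / real n) \<longlonglongrightarrow> drift_sq_lim / (1 - r\<^sup>2)"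
  unfolding m_def
  by (rule avg_ar_filter_sq_tendsto[OF r avg_drift_sq
        avg_ar_filter_cross_tendsto_0[OF abs_a_le r sum_a_sq_le avg_a_lagged]])

lemma avg_m_regressor: "(\<lambda>n. (\<Sum>t<n. m t * z (Suc t) $ i) / real n) \<longlonglongrightarrow> 0"
proof -
  obtain B where B: "0 \<le> B" "\<And>n. (\<Sum>t<n. (z (Suc t) $ i)\<^sup>2) \<le> B * real n" using sum_regressor_sq_le[of i] by blast
  show ?thesis unfolding m_def
    by (rule avg_ar_filter_cross_tendsto_0[where c = "\<lambda>s. z s $ i", OF abs_a_le r B(2) avg_a_lagged_regressor]) auto
qed

lemma avg_v: "(\<lambda>n. (\<Sum>t<n. v t) / real n) \<longlonglongrightarrow> stat_var"
proof -
  have "(\<lambda>n. (\<Sum>t<n. v t) / real n) \<longlonglongrightarrow> \<sigma>\<^sup>2 / (1 - r\<^sup>2)"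
  proof (rule avg_tendsto_of_contraction)
    show "(\<Sum>t<Suc n. v t) = r\<^sup>2 * (\<Sum>t<n. v t) + real n * \<sigma>\<^sup>2" for n
      by (subst sum.lessThan_Suc_shift) (simp add: v_0 v_Suc sum.distrib sum_distrib_left)
    show "\<bar>r\<^sup>2\<bar> < 1" using r_sq_less_1 by simp
    have "(\<lambda>n. \<sigma>\<^sup>2) \<longlonglongrightarrow> \<sigma>\<^sup>2" by simp
    moreover have "eventually (\<lambda>n. \<sigma>\<^sup>2 = real n * \<sigma>\<^sup>2 / real n) sequentially"
      using eventually_gt_at_top[of 0] by eventually_elim simp
    ultimately show "(\<lambda>n. real n * \<sigma>\<^sup>2 / real n) \<longlonglongrightarrow> \<sigma>\<^sup>2" by (rule Lim_transform_eventually)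
  qed
  thus ?thesis by (simp add: stat_var_def)
qed

definition x :: "nat \<Rightarrow> 'a \<Rightarrow> real" where "x t \<omega> = m t + u t \<omega>"

lemma x_Suc: "x (Suc t) \<omega> = r * x t \<omega> + z (Suc t) \<bullet> b + \<epsilon> (Suc t) \<omega>"
  by (simp add: x_def m_def u_Suc a_def algebra_simps)

lemma ARproc_x: "ARproc r b z (\<lambda>s. \<epsilon> s \<omega>) t = x t \<omega>"
  by (induction t) (simp_all add: x_def m_def u_def a_def algebra_simps)

definition path_sq_lim where "path_sq_lim = drift_sq_lim / (1 - r\<^sup>2) + stat_var"

definition typical :: "'a \<Rightarrow> bool" where
  "typical \<omega> \<longleftrightarrow> (\<lambda>n. (\<Sum>t<n. (\<epsilon> (Suc t) \<omega>)\<^sup>2) / real n) \<longlonglongrightarrow> \<sigma>\<^sup>2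
     \<and> (\<lambda>n. (\<Sum>t<n. (x t \<omega>)\<^sup>2) / real n) \<longlonglongrightarrow> path_sq_lim
     \<and> (\<lambda>n. (\<Sum>t<n. \<epsilon> (Suc t) \<omega> * x t \<omega>) / real n) \<longlonglongrightarrow> 0
     \<and> (\<forall>i. (\<lambda>n. (\<Sum>t<n. \<epsilon> (Suc t) \<omega> * z (Suc t) $ i) / real n) \<longlonglongrightarrow> 0)
     \<and> (\<forall>i. (\<lambda>n. (\<Sum>t<n. x t \<omega> * z (Suc t) $ i) / real n) \<longlonglongrightarrow> 0)"

lemma AE_avg_path_sq: "AE \<omega> in M. (\<lambda>n. (\<Sum>t<n. (x t \<omega>)\<^sup>2) / real n) \<longlonglongrightarrow> path_sq_lim"
  using AE_avg_u_weighted[OF sum_m_sq_le] AE_avg_u_sq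
proof eventually_elim
  case (elim \<omega>)
  have "(\<lambda>n. (\<Sum>t<n. (m t)\<^sup>2) / real n + 2 * ((\<Sum>t<n. u t \<omega> * m t) / real n) + (\<Sum>t<n. (u t \<omega>)\<^sup>2) / real n)
      \<longlonglongrightarrow> drift_sq_lim / (1 - r\<^sup>2) + 2 * 0 + stat_var"
    by (intro tendsto_intros avg_m_sq elim)
  moreover have "(\<Sum>t<n. (m t)\<^sup>2) / real n + 2 * ((\<Sum>t<n. u t \<omega> * m t) / real n) + (\<Sum>t<n. (u t \<omega>)\<^sup>2) / real n
      = (\<Sum>t<n. (x t \<omega>)\<^sup>2) / real n" for n
    by (simp add: x_def power2_eq_square sum.distrib sum_distrib_left algebra_simps add_divide_distrib[symmetric])
  ultimately show ?case by (simp add: path_sq_lim_def)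
qed

lemma AE_avg_noise_path: "AE \<omega> in M. (\<lambda>n. (\<Sum>t<n. \<epsilon> (Suc t) \<omega> * x t \<omega>) / real n) \<longlonglongrightarrow> 0"
  using AE_avg_noise_weighted[OF sum_m_sq_le] AE_avg_noise_u
proof eventually_elim
  case (elim \<omega>)
  have "(\<lambda>n. (\<Sum>t<n. \<epsilon> (Suc t) \<omega> * m t) / real n + (\<Sum>t<n. \<epsilon> (Suc t) \<omega> * u t \<omega>) / real n) \<longlonglongrightarrow> 0 + 0"
    by (intro tendsto_intros elim)
  thus ?case by (simp add: x_def sum.distrib algebra_simps add_divide_distrib[symmetric])
qed

lemma AE_avg_noise_regressor:
  "AE \<omega> in M. \<forall>i. (\<lambda>n. (\<Sum>t<n. \<epsilon> (Suc t) \<omega> * z (Suc t) $ i) / real n) \<longlonglongrightarrow> 0"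
proof -
  obtain B where B: "\<And>i n. (\<Sum>t<n. (z (Suc t) $ i)\<^sup>2) \<le> B i * real n"
    using sum_regressor_sq_le by metis
  have "AE \<omega> in M. \<forall>i\<in>UNIV. (\<lambda>n. (\<Sum>t<n. \<epsilon> (Suc t) \<omega> * z (Suc t) $ i) / real n) \<longlonglongrightarrow> 0"
    by (intro AE_finite_allI AE_avg_noise_weighted[OF B]) simp
  thus ?thesis by simp
qed

lemma AE_avg_path_regressor:
  "AE \<omega> in M. \<forall>i. (\<lambda>n. (\<Sum>t<n. x t \<omega> * z (Suc t) $ i) / real n) \<longlonglongrightarrow> 0"
proof -
  obtain B where B: "\<And>i n. (\<Sum>t<n. (z (Suc t) $ i)\<^sup>2) \<le> B i * real n"
    using sum_regressor_sq_le by metis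
  have "AE \<omega> in M. \<forall>i\<in>UNIV. (\<lambda>n. (\<Sum>t<n. u t \<omega> * z (Suc t) $ i) / real n) \<longlonglongrightarrow> 0"
    by (intro AE_finite_allI AE_avg_u_weighted[OF B]) simp
  thus ?thesis
  proof eventually_elim
    case (elim \<omega>)
    show ?case
    proof
      fix i
      have "(\<lambda>n. (\<Sum>t<n. m t * z (Suc t) $ i) / real n + (\<Sum>t<n. u t \<omega> * z (Suc t) $ i) / real n) \<longlonglongrightarrow> 0 + 0"
        using elim by (intro tendsto_intros avg_m_regressor) auto
      thus "(\<lambda>n. (\<Sum>t<n. x t \<omega> * z (Suc t) $ i) / real n) \<longlonglongrightarrow> 0"
        by (simp add: x_def sum.distrib algebra_simps add_divide_distrib[symmetric])
    qed
  qed
qed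

lemma AE_typical: "AE \<omega> in M. typical \<omega>"
  using AE_avg_noise_sq AE_avg_path_sq AE_avg_noise_path AE_avg_noise_regressor AE_avg_path_regressor
  unfolding typical_def by eventually_elim blast

section \<open>Convergence of the log-likelihood ratio\<close>

definition regr_sum where "regr_sum n i j = (\<Sum>t<n. z (Suc t) $ i * z (Suc t) $ j)"
definition noise_sq_sum where "noise_sq_sum n \<omega> = (\<Sum>t<n. (\<epsilon> (Suc t) \<omega>)\<^sup>2)"
definition path_sq_sum where "path_sq_sum n \<omega> = (\<Sum>t<n. (x t \<omega>)\<^sup>2)"
definition noise_path_sum where "noise_path_sum n \<omega> = (\<Sum>t<n. \<epsilon> (Suc t) \<omega> * x t \<omega>)"
definition noise_regr_sum where "noise_regr_sum n \<omega> i = (\<Sum>t<n. \<epsilon> (Suc t) \<omega> * z (Suc t) $ i)"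
definition path_regr_sum where "path_regr_sum n \<omega> i = (\<Sum>t<n. x t \<omega> * z (Suc t) $ i)"

definition resid :: "real \<Rightarrow> real^'m \<Rightarrow> nat \<Rightarrow> 'a \<Rightarrow> real" where
  "resid \<rho> \<beta> t \<omega> = x (Suc t) \<omega> - \<rho> * x t \<omega> - z (Suc t) \<bullet> \<beta>"

lemma inner_sq_eq_double_sum: "(y \<bullet> (g::real^'m))\<^sup>2 = (\<Sum>i\<in>UNIV. \<Sum>j\<in>UNIV. g $ i * g $ j * (y $ i * y $ j))"
  by (simp add: inner_vec_def power2_eq_square sum_product algebra_simps)

lemma resid_sq_expand:
  "(resid \<rho> \<beta> t \<omega>)\<^sup>2 = (\<epsilon> (Suc t) \<omega>)\<^sup>2 + (r - \<rho>)\<^sup>2 * (x t \<omega>)\<^sup>2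
    + (\<Sum>i\<in>UNIV. \<Sum>j\<in>UNIV. (b - \<beta>) $ i * (b - \<beta>) $ j * (z (Suc t) $ i * z (Suc t) $ j))
    + 2 * (r - \<rho>) * (\<epsilon> (Suc t) \<omega> * x t \<omega>)
    + 2 * (\<Sum>i\<in>UNIV. (b - \<beta>) $ i * (\<epsilon> (Suc t) \<omega> * z (Suc t) $ i))
    + 2 * (r - \<rho>) * (\<Sum>i\<in>UNIV. (b - \<beta>) $ i * (x t \<omega> * z (Suc t) $ i))"
proof -
  define w where "w = z (Suc t) \<bullet> (b - \<beta>)"
  have "resid \<rho> \<beta> t \<omega> = \<epsilon> (Suc t) \<omega> + (r - \<rho>) * x t \<omega> + w"
    by (simp add: resid_def x_Suc w_def inner_diff_right algebra_simps)
  hence "(resid \<rho> \<beta> t \<omega>)\<^sup>2 = (\<epsilon> (Suc t) \<omega> + (r - \<rho>) * x t \<omega> + w)\<^sup>2" by simp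
  also have "\<dots> = (\<epsilon> (Suc t) \<omega>)\<^sup>2 + (r - \<rho>)\<^sup>2 * (x t \<omega>)\<^sup>2 + w\<^sup>2
      + 2 * (r - \<rho>) * (\<epsilon> (Suc t) \<omega> * x t \<omega>) + 2 * (\<epsilon> (Suc t) \<omega> * w) + 2 * (r - \<rho>) * (x t \<omega> * w)"
    by (simp add: power2_eq_square algebra_simps)
  finally have "(resid \<rho> \<beta> t \<omega>)\<^sup>2 = (\<epsilon> (Suc t) \<omega>)\<^sup>2 + (r - \<rho>)\<^sup>2 * (x t \<omega>)\<^sup>2 + w\<^sup>2
      + 2 * (r - \<rho>) * (\<epsilon> (Suc t) \<omega> * x t \<omega>) + 2 * (\<epsilon> (Suc t) \<omega> * w) + 2 * (r - \<rho>) * (x t \<omega> * w)" .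
  moreover have "w\<^sup>2 = (\<Sum>i\<in>UNIV. \<Sum>j\<in>UNIV. (b - \<beta>) $ i * (b - \<beta>) $ j * (z (Suc t) $ i * z (Suc t) $ j))"
    unfolding w_def by (rule inner_sq_eq_double_sum)
  moreover have "c * w = (\<Sum>i\<in>UNIV. (b - \<beta>) $ i * (c * z (Suc t) $ i))" for c
    by (simp add: w_def inner_vec_def sum_distrib_left algebra_simps)
  ultimately show ?thesis by simp
qed

lemma sum_resid_sq_expand:
  "(\<Sum>t<n. (resid \<rho> \<beta> t \<omega>)\<^sup>2) = noise_sq_sum n \<omega> + (r - \<rho>)\<^sup>2 * path_sq_sum n \<omega>
    + (\<Sum>i\<in>UNIV. \<Sum>j\<in>UNIV. (b - \<beta>) $ i * (b - \<beta>) $ j * regr_sum n i j)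
    + 2 * (r - \<rho>) * noise_path_sum n \<omega>
    + 2 * (\<Sum>i\<in>UNIV. (b - \<beta>) $ i * noise_regr_sum n \<omega> i)
    + 2 * (r - \<rho>) * (\<Sum>i\<in>UNIV. (b - \<beta>) $ i * path_regr_sum n \<omega> i)"
  unfolding resid_sq_expand noise_sq_sum_def path_sq_sum_def regr_sum_def noise_path_sum_def noise_regr_sum_def path_regr_sum_def
  by (simp add: sum.distrib sum_distrib_left sum.swap[of _ "{..<n}"])

definition resid_sq_lim :: "real \<Rightarrow> real^'m \<Rightarrow> real" where
  "resid_sq_lim \<rho> \<beta> = \<sigma>\<^sup>2 + (r - \<rho>)\<^sup>2 * path_sq_lim + (\<Sum>i\<in>UNIV. \<Sum>j\<in>UNIV. (b - \<beta>) $ i * (b - \<beta>) $ j * Sz $ i $ j)"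

definition resid_err :: "real \<Rightarrow> nat \<Rightarrow> 'a \<Rightarrow> real" where
  "resid_err R n \<omega> = \<bar>noise_sq_sum n \<omega> / real n - \<sigma>\<^sup>2\<bar> + R\<^sup>2 * \<bar>path_sq_sum n \<omega> / real n - path_sq_lim\<bar>
     + R\<^sup>2 * (\<Sum>i\<in>UNIV. \<Sum>j\<in>UNIV. \<bar>regr_sum n i j / real n - Sz $ i $ j\<bar>)
     + 2 * R * \<bar>noise_path_sum n \<omega> / real n\<bar> + 2 * R * (\<Sum>i\<in>UNIV. \<bar>noise_regr_sum n \<omega> i / real n\<bar>)
     + 2 * R\<^sup>2 * (\<Sum>i\<in>UNIV. \<bar>path_regr_sum n \<omega> i / real n\<bar>)"

lemma resid_err_tendsto_0: "typical \<omega> \<Longrightarrow> (\<lambda>n. resid_err R n \<omega>) \<longlonglongrightarrow> 0"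
proof -
  assume g: "typical \<omega>"
  have Z: "(\<lambda>n. regr_sum n i j / real n) \<longlonglongrightarrow> Sz $ i $ j" for i j unfolding regr_sum_def by (rule avg_regressor_products)
  have l0: "(\<lambda>n. f n - c) \<longlonglongrightarrow> 0" if "f \<longlonglongrightarrow> c" for f :: "nat \<Rightarrow> real" and c
    using tendsto_diff[OF that tendsto_const[of c]] by simp
  have Zs: "(\<lambda>n. \<Sum>i\<in>UNIV. \<Sum>j\<in>UNIV. \<bar>regr_sum n i j / real n - Sz $ i $ j\<bar>) \<longlonglongrightarrow> (\<Sum>i\<in>(UNIV::'m set). \<Sum>j\<in>(UNIV::'m set). \<bar>0\<bar>)"
    by (intro tendsto_sum tendsto_rabs l0 Z)
  hence Zs0: "(\<lambda>n. \<Sum>i\<in>UNIV. \<Sum>j\<in>UNIV. \<bar>regr_sum n i j / real n - Sz $ i $ j\<bar>) \<longlonglongrightarrow> 0" by simp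
  have "(\<lambda>n. resid_err R n \<omega>) \<longlonglongrightarrow> \<bar>0\<bar> + R\<^sup>2 * \<bar>0\<bar> + R\<^sup>2 * (\<Sum>i\<in>UNIV. \<Sum>j\<in>UNIV. \<bar>0\<bar>)
      + 2 * R * \<bar>0\<bar> + 2 * R * (\<Sum>i\<in>(UNIV::'m set). \<bar>0\<bar>) + 2 * R\<^sup>2 * (\<Sum>i\<in>(UNIV::'m set). \<bar>0\<bar>)"
    unfolding resid_err_def using g unfolding typical_def noise_sq_sum_def[symmetric] path_sq_sum_def[symmetric] noise_path_sum_def[symmetric]
    by (intro tendsto_intros l0 Zs) (auto simp: noise_regr_sum_def path_regr_sum_def Zs0)
  thus ?thesis by simp
qed

lemma avg_sum_resid_sq_minus_lim:
  "(\<Sum>t<n. (resid \<rho> \<beta> t \<omega>)\<^sup>2) / real n - resid_sq_lim \<rho> \<beta>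
    = (noise_sq_sum n \<omega> / real n - \<sigma>\<^sup>2) + (r - \<rho>)\<^sup>2 * (path_sq_sum n \<omega> / real n - path_sq_lim)
    + (\<Sum>i\<in>UNIV. \<Sum>j\<in>UNIV. (b - \<beta>) $ i * (b - \<beta>) $ j * (regr_sum n i j / real n - Sz $ i $ j))
    + 2 * (r - \<rho>) * (noise_path_sum n \<omega> / real n)
    + 2 * (\<Sum>i\<in>UNIV. (b - \<beta>) $ i * (noise_regr_sum n \<omega> i / real n))
    + 2 * (r - \<rho>) * (\<Sum>i\<in>UNIV. (b - \<beta>) $ i * (path_regr_sum n \<omega> i / real n))"
proof -
  have avg: "(\<Sum>t<n. (resid \<rho> \<beta> t \<omega>)\<^sup>2) / real n = noise_sq_sum n \<omega> / real n
      + (r - \<rho>)\<^sup>2 * (path_sq_sum n \<omega> / real n)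
      + (\<Sum>i\<in>UNIV. \<Sum>j\<in>UNIV. (b - \<beta>) $ i * (b - \<beta>) $ j * (regr_sum n i j / real n))
      + 2 * (r - \<rho>) * (noise_path_sum n \<omega> / real n)
      + 2 * (\<Sum>i\<in>UNIV. (b - \<beta>) $ i * (noise_regr_sum n \<omega> i / real n))
      + 2 * (r - \<rho>) * (\<Sum>i\<in>UNIV. (b - \<beta>) $ i * (path_regr_sum n \<omega> i / real n))"
    unfolding sum_resid_sq_expand
    by (simp only: add_divide_distrib sum_divide_distrib times_divide_eq_right[symmetric])
  have "(\<Sum>i\<in>UNIV. \<Sum>j\<in>UNIV. (b - \<beta>) $ i * (b - \<beta>) $ j * (regr_sum n i j / real n - Sz $ i $ j))
      = (\<Sum>i\<in>UNIV. \<Sum>j\<in>UNIV. (b - \<beta>) $ i * (b - \<beta>) $ j * (regr_sum n i j / real n))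
        - (\<Sum>i\<in>UNIV. \<Sum>j\<in>UNIV. (b - \<beta>) $ i * (b - \<beta>) $ j * Sz $ i $ j)"
    by (simp add: right_diff_distrib sum_subtractf)
  thus ?thesis unfolding avg resid_sq_lim_def by (simp add: algebra_simps)
qed

lemma abs_sum_mult_le:
  fixes g c :: "'i \<Rightarrow> real"
  assumes "\<And>i. i \<in> A \<Longrightarrow> \<bar>g i\<bar> \<le> R"
  shows "\<bar>\<Sum>i\<in>A. g i * c i\<bar> \<le> R * (\<Sum>i\<in>A. \<bar>c i\<bar>)"
proof -
  have "\<bar>\<Sum>i\<in>A. g i * c i\<bar> \<le> (\<Sum>i\<in>A. \<bar>g i\<bar> * \<bar>c i\<bar>)"
    by (rule order_trans[OF sum_abs]) (simp add: abs_mult)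
  also have "\<dots> \<le> (\<Sum>i\<in>A. R * \<bar>c i\<bar>)" using assms by (intro sum_mono mult_right_mono) auto
  finally show ?thesis by (simp add: sum_distrib_left)
qed

lemma abs_avg_sum_resid_sq_le:
  assumes R: "\<bar>r - \<rho>\<bar> \<le> R" "\<And>i. \<bar>(b - \<beta>) $ i\<bar> \<le> R"
  shows "\<bar>(\<Sum>t<n. (resid \<rho> \<beta> t \<omega>)\<^sup>2) / real n - resid_sq_lim \<rho> \<beta>\<bar> \<le> resid_err R n \<omega>"
proof -
  define d where "d = r - \<rho>"
  define g where "g = b - \<beta>"
  have R0: "0 \<le> R" using R(1) by linarith
  have d: "\<bar>d\<bar> \<le> R" and g: "\<And>i. \<bar>g $ i\<bar> \<le> R" using R by (auto simp: d_def g_def)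
  have d_sq: "d\<^sup>2 \<le> R\<^sup>2" using d R0 by (metis abs_le_square_iff abs_of_nonneg)
  have regr: "\<bar>\<Sum>i\<in>UNIV. \<Sum>j\<in>UNIV. g $ i * g $ j * (regr_sum n i j / real n - Sz $ i $ j)\<bar>
      \<le> R\<^sup>2 * (\<Sum>i\<in>UNIV. \<Sum>j\<in>UNIV. \<bar>regr_sum n i j / real n - Sz $ i $ j\<bar>)"
  proof -
    have inner: "\<bar>\<Sum>j\<in>UNIV. g $ i * g $ j * c j\<bar> \<le> R * (R * (\<Sum>j\<in>UNIV. \<bar>c j\<bar>))"
      for i and c :: "'m \<Rightarrow> real"
    proof -
      have "\<bar>\<Sum>j\<in>UNIV. g $ i * g $ j * c j\<bar> = \<bar>g $ i\<bar> * \<bar>\<Sum>j\<in>UNIV. g $ j * c j\<bar>"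
        by (simp add: mult.assoc sum_distrib_left[symmetric] abs_mult)
      also have "\<dots> \<le> R * (R * (\<Sum>j\<in>UNIV. \<bar>c j\<bar>))"
        using abs_sum_mult_le[of UNIV "\<lambda>j. g $ j" R c] g R0 by (intro mult_mono) auto
      finally show ?thesis .
    qed
    have "\<bar>\<Sum>i\<in>UNIV. \<Sum>j\<in>UNIV. g $ i * g $ j * (regr_sum n i j / real n - Sz $ i $ j)\<bar>
        \<le> (\<Sum>i\<in>UNIV. R * (R * (\<Sum>j\<in>UNIV. \<bar>regr_sum n i j / real n - Sz $ i $ j\<bar>)))"
      by (rule order_trans[OF sum_abs], intro sum_mono inner)
    thus ?thesis by (simp add: sum_distrib_left power2_eq_square mult.assoc)
  qed
  have "\<bar>p1 + p2 + p3 + p4 + p5 + p6\<bar> \<le> \<bar>p1\<bar> + \<bar>p2\<bar> + \<bar>p3\<bar> + \<bar>p4\<bar> + \<bar>p5\<bar> + \<bar>p6\<bar>"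
    for p1 p2 p3 p4 p5 p6 :: real by linarith
  hence "\<bar>(\<Sum>t<n. (resid \<rho> \<beta> t \<omega>)\<^sup>2) / real n - resid_sq_lim \<rho> \<beta>\<bar>
      \<le> \<bar>noise_sq_sum n \<omega> / real n - \<sigma>\<^sup>2\<bar> + d\<^sup>2 * \<bar>path_sq_sum n \<omega> / real n - path_sq_lim\<bar>
      + \<bar>\<Sum>i\<in>UNIV. \<Sum>j\<in>UNIV. g $ i * g $ j * (regr_sum n i j / real n - Sz $ i $ j)\<bar>
      + 2 * \<bar>d\<bar> * \<bar>noise_path_sum n \<omega> / real n\<bar> + 2 * \<bar>\<Sum>i\<in>UNIV. g $ i * (noise_regr_sum n \<omega> i / real n)\<bar>
      + 2 * \<bar>d\<bar> * \<bar>\<Sum>i\<in>UNIV. g $ i * (path_regr_sum n \<omega> i / real n)\<bar>"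
    unfolding avg_sum_resid_sq_minus_lim d_def[symmetric] g_def[symmetric]
    by (rule order_trans) (simp add: abs_mult)
  also have "\<dots> \<le> resid_err R n \<omega>"
    unfolding resid_err_def
  proof (intro add_mono order.refl regr mult_right_mono mult_left_mono d_sq d)
    show "2 * \<bar>\<Sum>i\<in>UNIV. g $ i * (noise_regr_sum n \<omega> i / real n)\<bar>
        \<le> 2 * R * (\<Sum>i\<in>UNIV. \<bar>noise_regr_sum n \<omega> i / real n\<bar>)"
      using abs_sum_mult_le[of UNIV "\<lambda>i. g $ i" R "\<lambda>i. noise_regr_sum n \<omega> i / real n"] g by simp
    have "\<bar>d\<bar> * \<bar>\<Sum>i\<in>UNIV. g $ i * (path_regr_sum n \<omega> i / real n)\<bar>
        \<le> R * (R * (\<Sum>i\<in>UNIV. \<bar>path_regr_sum n \<omega> i / real n\<bar>))"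
      using abs_sum_mult_le[of UNIV "\<lambda>i. g $ i" R "\<lambda>i. path_regr_sum n \<omega> i / real n"] g d R0
      by (intro mult_mono) auto
    thus "2 * \<bar>d\<bar> * \<bar>\<Sum>i\<in>UNIV. g $ i * (path_regr_sum n \<omega> i / real n)\<bar>
        \<le> 2 * R\<^sup>2 * (\<Sum>i\<in>UNIV. \<bar>path_regr_sum n \<omega> i / real n\<bar>)"
      by (simp add: power2_eq_square mult.assoc)
  qed auto
  finally show ?thesis .
qed

lemma resid_eq: "resid \<rho> \<beta> t \<omega> = \<epsilon> (Suc t) \<omega> + (r - \<rho>) * u t \<omega> + ((r - \<rho>) * m t + z (Suc t) \<bullet> (b - \<beta>))"
  unfolding resid_def x_Suc by (simp add: x_def inner_diff_right algebra_simps)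

lemma finite_moments_resid: "finite_moments (\<lambda>\<omega>. resid \<rho> \<beta> t \<omega>)"
  unfolding resid_eq by (intro finite_moments_add finite_moments_scale finite_moments_const finite_moments_noise finite_moments_u) simp

lemma integral_resid_sq: "(\<integral>\<omega>. (resid \<rho> \<beta> t \<omega>)\<^sup>2 \<partial>M)
    = \<sigma>\<^sup>2 + (r - \<rho>)\<^sup>2 * v t + ((r - \<rho>) * m t + z (Suc t) \<bullet> (b - \<beta>))\<^sup>2"
proof -
  define d where "d = r - \<rho>"
  define c where "c = (r - \<rho>) * m t + z (Suc t) \<bullet> (b - \<beta>)"
  have "(\<integral>\<omega>. (resid \<rho> \<beta> t \<omega>)\<^sup>2 \<partial>M) = (\<integral>\<omega>. (\<epsilon> (Suc t) \<omega>)\<^sup>2 + d\<^sup>2 * (u t \<omega>)\<^sup>2 + c\<^sup>2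
      + 2 * d * (\<epsilon> (Suc t) \<omega> * u t \<omega>) + 2 * c * \<epsilon> (Suc t) \<omega> + 2 * d * c * u t \<omega> \<partial>M)"
  proof (intro Bochner_Integration.integral_cong refl)
    fix \<omega>
    have "resid \<rho> \<beta> t \<omega> = \<epsilon> (Suc t) \<omega> + d * u t \<omega> + c" by (simp add: resid_eq d_def c_def)
    thus "(resid \<rho> \<beta> t \<omega>)\<^sup>2 = (\<epsilon> (Suc t) \<omega>)\<^sup>2 + d\<^sup>2 * (u t \<omega>)\<^sup>2 + c\<^sup>2
      + 2 * d * (\<epsilon> (Suc t) \<omega> * u t \<omega>) + 2 * c * \<epsilon> (Suc t) \<omega> + 2 * d * c * u t \<omega>"
      by (simp add: power2_eq_square algebra_simps)
  qed
  also have "\<dots> = (\<integral>\<omega>. (\<epsilon> (Suc t) \<omega>)\<^sup>2 \<partial>M) + d\<^sup>2 * (\<integral>\<omega>. (u t \<omega>)\<^sup>2 \<partial>M) + c\<^sup>2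
      + 2 * d * (\<integral>\<omega>. \<epsilon> (Suc t) \<omega> * u t \<omega> \<partial>M) + 2 * c * (\<integral>\<omega>. \<epsilon> (Suc t) \<omega> \<partial>M)
      + 2 * d * c * (\<integral>\<omega>. u t \<omega> \<partial>M)"
  proof -
    have i1: "integrable M (\<lambda>\<omega>. (\<epsilon> (Suc t) \<omega>)\<^sup>2)" by (intro finite_moments_integrable finite_moments_power finite_moments_noise) simp
    have i2: "integrable M (\<lambda>\<omega>. (u t \<omega>)\<^sup>2)" by (intro finite_moments_integrable finite_moments_power finite_moments_u)
    have i3: "integrable M (\<lambda>\<omega>. \<epsilon> (Suc t) \<omega> * u t \<omega>)" by (intro finite_moments_integrable finite_moments_mult finite_moments_noise finite_moments_u) simp
    have i4: "integrable M (\<epsilon> (Suc t))" by (intro finite_moments_integrable finite_moments_noise) simp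
    have i5: "integrable M (u t)" by (intro finite_moments_integrable finite_moments_u)
    show ?thesis using i1 i2 i3 i4 i5 by (simp add: prob_space)
  qed
  also have "\<dots> = \<sigma>\<^sup>2 + d\<^sup>2 * v t + c\<^sup>2"
    using integral_noise_sq[of "Suc t"] integral_noise[of "Suc t"] integral_u[of t] integral_noise_mult_eq_0[OF _ determined_before_u finite_moments_u, of t]
    by (simp add: v_def)
  finally show ?thesis by (simp add: d_def c_def)
qed

lemma avg_integral_resid_sq: "(\<lambda>n. (\<Sum>t<n. \<integral>\<omega>. (resid \<rho> \<beta> t \<omega>)\<^sup>2 \<partial>M) / real n) \<longlonglongrightarrow> resid_sq_lim \<rho> \<beta>"
proof -
  define d where "d = r - \<rho>"
  define g where "g = b - \<beta>"
  have e: "(\<Sum>t<n. \<integral>\<omega>. (resid \<rho> \<beta> t \<omega>)\<^sup>2 \<partial>M) / real n =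
      (\<Sum>t<n. \<sigma>\<^sup>2) / real n + d\<^sup>2 * ((\<Sum>t<n. v t) / real n) + d\<^sup>2 * ((\<Sum>t<n. (m t)\<^sup>2) / real n)
      + 2 * d * (\<Sum>i\<in>UNIV. g $ i * ((\<Sum>t<n. m t * z (Suc t) $ i) / real n))
      + (\<Sum>i\<in>UNIV. \<Sum>j\<in>UNIV. g $ i * g $ j * ((\<Sum>t<n. z (Suc t) $ i * z (Suc t) $ j) / real n))" for n
  proof -
    have "((r - \<rho>) * m t + z (Suc t) \<bullet> (b - \<beta>))\<^sup>2 = d\<^sup>2 * (m t)\<^sup>2
        + 2 * d * (\<Sum>i\<in>UNIV. g $ i * (m t * z (Suc t) $ i))
        + (\<Sum>i\<in>UNIV. \<Sum>j\<in>UNIV. g $ i * g $ j * (z (Suc t) $ i * z (Suc t) $ j))" for t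
    proof -
      have "((r - \<rho>) * m t + z (Suc t) \<bullet> (b - \<beta>))\<^sup>2 = d\<^sup>2 * (m t)\<^sup>2
          + 2 * d * (m t * (z (Suc t) \<bullet> g)) + (z (Suc t) \<bullet> g)\<^sup>2"
        by (simp add: d_def g_def power2_eq_square algebra_simps)
      also have "m t * (z (Suc t) \<bullet> g) = (\<Sum>i\<in>UNIV. g $ i * (m t * z (Suc t) $ i))"
        by (simp add: inner_vec_def sum_distrib_left algebra_simps)
      also have "(z (Suc t) \<bullet> g)\<^sup>2 = (\<Sum>i\<in>UNIV. \<Sum>j\<in>UNIV. g $ i * g $ j * (z (Suc t) $ i * z (Suc t) $ j))"
        by (rule inner_sq_eq_double_sum)
      finally show ?thesis .
    qed
    hence "(\<Sum>t<n. \<integral>\<omega>. (resid \<rho> \<beta> t \<omega>)\<^sup>2 \<partial>M) = (\<Sum>t<n. \<sigma>\<^sup>2) + d\<^sup>2 * (\<Sum>t<n. v t) + d\<^sup>2 * (\<Sum>t<n. (m t)\<^sup>2)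
      + 2 * d * (\<Sum>i\<in>UNIV. g $ i * (\<Sum>t<n. m t * z (Suc t) $ i))
      + (\<Sum>i\<in>UNIV. \<Sum>j\<in>UNIV. g $ i * g $ j * (\<Sum>t<n. z (Suc t) $ i * z (Suc t) $ j))"
      unfolding integral_resid_sq d_def[symmetric] by (simp add: sum.distrib sum_distrib_left sum.swap[of _ "{..<n}"])
    thus ?thesis
      by (simp only: add_divide_distrib sum_divide_distrib times_divide_eq_right[symmetric])
  qed
  have "(\<lambda>n. (\<Sum>t<n. \<sigma>\<^sup>2) / real n + d\<^sup>2 * ((\<Sum>t<n. v t) / real n) + d\<^sup>2 * ((\<Sum>t<n. (m t)\<^sup>2) / real n)
      + 2 * d * (\<Sum>i\<in>UNIV. g $ i * ((\<Sum>t<n. m t * z (Suc t) $ i) / real n))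
      + (\<Sum>i\<in>UNIV. \<Sum>j\<in>UNIV. g $ i * g $ j * ((\<Sum>t<n. z (Suc t) $ i * z (Suc t) $ j) / real n)))
    \<longlonglongrightarrow> \<sigma>\<^sup>2 + d\<^sup>2 * stat_var + d\<^sup>2 * (drift_sq_lim / (1 - r\<^sup>2)) + 2 * d * (\<Sum>i\<in>(UNIV::'m set). g $ i * 0)
      + (\<Sum>i\<in>UNIV. \<Sum>j\<in>UNIV. g $ i * g $ j * Sz $ i $ j)"
  proof (intro avg_v avg_m_sq avg_m_regressor avg_regressor_products tendsto_add tendsto_mult tendsto_const tendsto_sum)
    show "(\<lambda>n. (\<Sum>t<n. \<sigma>\<^sup>2) / real n) \<longlonglongrightarrow> \<sigma>\<^sup>2"
      by (rule LIMSEQ_cong_pos[of "\<lambda>_. \<sigma>\<^sup>2"]) auto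
  qed
  thus ?thesis unfolding e by (simp add: resid_sq_lim_def path_sq_lim_def d_def g_def algebra_simps)
qed


definition log_ratio :: "real \<Rightarrow> real^'m \<Rightarrow> real \<Rightarrow> nat \<Rightarrow> 'a \<Rightarrow> real" where
  "log_ratio \<rho> \<beta> s n \<omega> = ln (Rn z (r, b, \<sigma>) (\<rho>, \<beta>, s) n (\<lambda>t. x t \<omega>))"

definition log_scale :: "real \<Rightarrow> real" where "log_scale s = (1/2) * ln (2 * pi * \<sigma>\<^sup>2) - (1/2) * ln (2 * pi * s\<^sup>2)"

lemma log_ratio_eq:
  assumes s: "0 < s"
  shows "log_ratio \<rho> \<beta> s n \<omega> = real n * log_scale s - (\<Sum>t<n. (resid \<rho> \<beta> t \<omega>)\<^sup>2) / (2 * s\<^sup>2) + noise_sq_sum n \<omega> / (2 * \<sigma>\<^sup>2)"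
proof -
  have r0: "x (Suc t) \<omega> - r * x t \<omega> - z (Suc t) \<bullet> b = \<epsilon> (Suc t) \<omega>" for t by (simp add: x_Suc)
  have r1: "resid r b t \<omega> = \<epsilon> (Suc t) \<omega>" for t by (simp add: resid_def x_Suc)
  show ?thesis
    unfolding log_ratio_def ln_Rn[OF s sigma_pos] ln_fdens[OF s] ln_fdens[OF sigma_pos] r0 resid_def[symmetric]
    by (simp add: r1 noise_sq_sum_def log_scale_def sum_subtractf sum_divide_distrib[symmetric] algebra_simps)
qed

definition kl_lim :: "real \<Rightarrow> real^'m \<Rightarrow> real \<Rightarrow> real" where
  "kl_lim \<rho> \<beta> s = resid_sq_lim \<rho> \<beta> / (2 * s\<^sup>2) - log_scale s - 1/2"

lemma abs_avg_log_ratio_plus_kl_le: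
  assumes s: "0 < s" and n: "n > 0"
    and R: "\<bar>r - \<rho>\<bar> \<le> R" "\<And>i. \<bar>(b - \<beta>) $ i\<bar> \<le> R" and W: "1 / (2 * s\<^sup>2) \<le> W"
  shows "\<bar>log_ratio \<rho> \<beta> s n \<omega> / real n - - kl_lim \<rho> \<beta> s\<bar>
      \<le> W * resid_err R n \<omega> + \<bar>noise_sq_sum n \<omega> / real n - \<sigma>\<^sup>2\<bar> / (2 * \<sigma>\<^sup>2)"
proof -
  have e: "log_ratio \<rho> \<beta> s n \<omega> / real n - - kl_lim \<rho> \<beta> s
     = - (((\<Sum>t<n. (resid \<rho> \<beta> t \<omega>)\<^sup>2) / real n - resid_sq_lim \<rho> \<beta>) * (1 / (2 * s\<^sup>2)))
       + (noise_sq_sum n \<omega> / real n - \<sigma>\<^sup>2) / (2 * \<sigma>\<^sup>2)"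
    unfolding log_ratio_eq[OF s] kl_lim_def using n s sigma_pos by (simp add: field_simps)
  have "\<bar>((\<Sum>t<n. (resid \<rho> \<beta> t \<omega>)\<^sup>2) / real n - resid_sq_lim \<rho> \<beta>) * (1 / (2 * s\<^sup>2))\<bar> \<le> resid_err R n \<omega> * W"
    unfolding abs_mult using abs_avg_sum_resid_sq_le[OF R, where n=n and \<omega>=\<omega>] W s
    by (intro mult_mono) auto
  moreover have "\<bar>(noise_sq_sum n \<omega> / real n - \<sigma>\<^sup>2) / (2 * \<sigma>\<^sup>2)\<bar> = \<bar>noise_sq_sum n \<omega> / real n - \<sigma>\<^sup>2\<bar> / (2 * \<sigma>\<^sup>2)"
    by (simp add: abs_divide)
  ultimately show ?thesis unfolding e
    using abs_triangle_ineq[of "- (((\<Sum>t<n. (resid \<rho> \<beta> t \<omega>)\<^sup>2) / real n - resid_sq_lim \<rho> \<beta>) * (1 / (2 * s\<^sup>2)))"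
        "(noise_sq_sum n \<omega> / real n - \<sigma>\<^sup>2) / (2 * \<sigma>\<^sup>2)"]
    by (simp only: abs_minus_cancel mult.commute[of "resid_err R n \<omega>" W])
qed

lemma integral_neg_log_ratio:
  assumes s: "0 < s"
  shows "(\<integral>\<omega>. - log_ratio \<rho> \<beta> s n \<omega> \<partial>M) = - (real n * log_scale s)
      + (\<Sum>t<n. \<integral>\<omega>. (resid \<rho> \<beta> t \<omega>)\<^sup>2 \<partial>M) / (2 * s\<^sup>2) - real n * \<sigma>\<^sup>2 / (2 * \<sigma>\<^sup>2)"
proof -
  have noise: "(\<integral>\<omega>. noise_sq_sum n \<omega> \<partial>M) = real n * \<sigma>\<^sup>2"
    unfolding noise_sq_sum_def
    by (subst Bochner_Integration.integral_sum)
      (auto intro!: finite_moments_integrable finite_moments_power finite_moments_noise simp: integral_noise_sq)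
  have resid: "(\<integral>\<omega>. (\<Sum>t<n. (resid \<rho> \<beta> t \<omega>)\<^sup>2) \<partial>M) = (\<Sum>t<n. \<integral>\<omega>. (resid \<rho> \<beta> t \<omega>)\<^sup>2 \<partial>M)"
    by (intro Bochner_Integration.integral_sum finite_moments_integrable finite_moments_power finite_moments_resid)
  have "integrable M (\<lambda>\<omega>. (\<Sum>t<n. (resid \<rho> \<beta> t \<omega>)\<^sup>2))" "integrable M (noise_sq_sum n)"
    unfolding noise_sq_sum_def
    by (intro finite_moments_integrable finite_moments_sum finite_moments_power finite_moments_resid
        finite_moments_noise; simp)+
  moreover have "(\<integral>\<omega>. - log_ratio \<rho> \<beta> s n \<omega> \<partial>M)
      = (\<integral>\<omega>. - (real n * log_scale s) + (\<Sum>t<n. (resid \<rho> \<beta> t \<omega>)\<^sup>2) / (2 * s\<^sup>2) - noise_sq_sum n \<omega> / (2 * \<sigma>\<^sup>2) \<partial>M)"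
    by (intro Bochner_Integration.integral_cong refl) (simp add: log_ratio_eq[OF s])
  ultimately show ?thesis by (simp add: prob_space flip: noise resid)
qed

lemma avg_expected_log_ratio:
  assumes s: "0 < s"
  shows "(\<lambda>n. (\<integral>\<omega>. - log_ratio \<rho> \<beta> s n \<omega> \<partial>M) / real n) \<longlonglongrightarrow> kl_lim \<rho> \<beta> s"
proof (rule LIMSEQ_cong_pos)
  have "(\<lambda>n. - log_scale s + ((\<Sum>t<n. \<integral>\<omega>. (resid \<rho> \<beta> t \<omega>)\<^sup>2 \<partial>M) / real n) / (2 * s\<^sup>2) - \<sigma>\<^sup>2 / (2 * \<sigma>\<^sup>2))
      \<longlonglongrightarrow> - log_scale s + resid_sq_lim \<rho> \<beta> / (2 * s\<^sup>2) - \<sigma>\<^sup>2 / (2 * \<sigma>\<^sup>2)"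
    by (intro tendsto_intros avg_integral_resid_sq) (use s in auto)
  thus "(\<lambda>n. - log_scale s + ((\<Sum>t<n. \<integral>\<omega>. (resid \<rho> \<beta> t \<omega>)\<^sup>2 \<partial>M) / real n) / (2 * s\<^sup>2) - \<sigma>\<^sup>2 / (2 * \<sigma>\<^sup>2))
      \<longlonglongrightarrow> kl_lim \<rho> \<beta> s"
    using sigma_pos by (simp add: kl_lim_def)
  show "- log_scale s + ((\<Sum>t<n. \<integral>\<omega>. (resid \<rho> \<beta> t \<omega>)\<^sup>2 \<partial>M) / real n) / (2 * s\<^sup>2) - \<sigma>\<^sup>2 / (2 * \<sigma>\<^sup>2)
      = (\<integral>\<omega>. - log_ratio \<rho> \<beta> s n \<omega> \<partial>M) / real n" if "n > 0" for n
    unfolding integral_neg_log_ratio[OF s] using that s sigma_pos by (simp add: field_simps)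
qed

definition kl_rate :: "real \<times> (real^'m) \<times> real \<Rightarrow> real" where
  "kl_rate \<theta> = (case \<theta> of (\<rho>, \<beta>, s) \<Rightarrow> kl_lim \<rho> \<beta> s)"

lemma avg_expected_log_Rn:
  assumes "\<theta> \<in> Theta"
  shows "(\<lambda>n. (\<integral>\<omega>. - ln (Rn z (r, b, \<sigma>) \<theta> n (\<lambda>t. x t \<omega>)) \<partial>M) / real n) \<longlonglongrightarrow> kl_rate \<theta>"
  using assms avg_expected_log_ratio by (cases \<theta>) (auto simp: Theta_def kl_rate_def log_ratio_def)

lemma uniform_limit_avg_log_Rn:
  assumes "typical \<omega>" and K: "compact K" "K \<subseteq> Theta"
  shows "uniform_limit K (\<lambda>n \<theta>. ln (Rn z (r, b, \<sigma>) \<theta> n (\<lambda>t. x t \<omega>)) / real n)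
           (\<lambda>\<theta>. - kl_rate \<theta>) sequentially"
proof -
  obtain Rk where Rk: "\<And>\<theta>. \<theta> \<in> K \<Longrightarrow> norm \<theta> \<le> Rk"
    using compact_imp_bounded[OF K(1)] by (auto simp: bounded_iff)
  define R where "R = \<bar>r\<bar> + norm b + Rk"
  have R: "\<bar>r - \<rho>\<bar> \<le> R" "\<And>i. \<bar>(b - \<beta>) $ i\<bar> \<le> R" if "(\<rho>, \<beta>, s) \<in> K" for \<rho> \<beta> s
  proof -
    have \<rho>: "\<bar>\<rho>\<bar> \<le> Rk" using norm_fst_le[of \<rho> "(\<beta>, s)"] Rk[OF that] by simp
    have \<beta>: "norm \<beta> \<le> Rk" using norm_fst_le[of \<beta> s] norm_snd_le[where x = \<rho> and y = "(\<beta>, s)"] Rk[OF that] by simp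
    show "\<bar>r - \<rho>\<bar> \<le> R" using \<rho> norm_ge_zero[of b] unfolding R_def by linarith
    fix i
    have "\<bar>(b - \<beta>) $ i\<bar> \<le> norm b + norm \<beta>"
      using component_le_norm_cart[of b i] component_le_norm_cart[of \<beta> i] by simp
    thus "\<bar>(b - \<beta>) $ i\<bar> \<le> R" using \<beta> unfolding R_def by linarith
  qed
  have "bounded ((\<lambda>\<theta>. 1 / (2 * (snd (snd \<theta>))\<^sup>2)) ` K)"
    using K by (intro compact_imp_bounded compact_continuous_image continuous_intros)
      (auto simp: Theta_def)
  then obtain W where W: "\<And>\<rho> \<beta> s. (\<rho>, \<beta>, s) \<in> K \<Longrightarrow> 1 / (2 * s\<^sup>2) \<le> W"
    unfolding bounded_iff by (metis image_eqI real_norm_def abs_le_D1 snd_conv)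
  define B where "B n = W * resid_err R n \<omega> + \<bar>noise_sq_sum n \<omega> / real n - \<sigma>\<^sup>2\<bar> / (2 * \<sigma>\<^sup>2)" for n
  have "(\<lambda>n. noise_sq_sum n \<omega> / real n) \<longlonglongrightarrow> \<sigma>\<^sup>2"
    using assms(1) by (simp add: typical_def noise_sq_sum_def)
  hence "B \<longlonglongrightarrow> W * 0 + \<bar>\<sigma>\<^sup>2 - \<sigma>\<^sup>2\<bar> / (2 * \<sigma>\<^sup>2)"
    unfolding B_def by (intro tendsto_intros resid_err_tendsto_0 assms(1)) (use sigma_pos in auto)
  hence "B \<longlonglongrightarrow> 0" by simp
  thus ?thesis
  proof (rule uniform_limitI_majorant[rotated])
    fix n :: nat and \<theta> assume n: "n > 0" and \<theta>: "\<theta> \<in> K"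
    obtain \<rho> \<beta> s where \<theta>_eq: "\<theta> = (\<rho>, \<beta>, s)" by (cases \<theta>)
    have s: "0 < s" using \<theta> K(2) by (auto simp: \<theta>_eq Theta_def)
    show "\<bar>ln (Rn z (r, b, \<sigma>) \<theta> n (\<lambda>t. x t \<omega>)) / real n - - kl_rate \<theta>\<bar> \<le> B n"
      unfolding \<theta>_eq kl_rate_def log_ratio_def[symmetric] prod.case B_def
      using \<theta> by (intro abs_avg_log_ratio_plus_kl_le s n R W) (auto simp: \<theta>_eq)
  qed
qed

end

theorem theorem12:
  fixes M :: "'a measure"
    and \<epsilon> :: "nat \<Rightarrow> 'a \<Rightarrow> real"
    and z :: "nat \<Rightarrow> real^'m::finite"
    and \<rho>0 \<sigma>0 :: real and \<beta>0 :: "real^'m"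
    and \<Sigma>z :: "real^'m^'m"
  assumes P: "prob_space M"
    and iid_indep: "prob_space.indep_vars M (\<lambda>_. borel) \<epsilon> {1..}"
    and iid_normal: "\<And>t. t \<ge> 1 \<Longrightarrow> distributed M lborel (\<epsilon> t) (normal_density 0 \<sigma>0)"
    and rho0: "\<bar>\<rho>0\<bar> < 1"
    and B1a: "(\<lambda>n. (\<Sum>t=1..n. z t) /\<^sub>R real n) \<longlonglongrightarrow> 0"
    and B1b: "\<And>k. k \<ge> 1 \<Longrightarrow>
       (\<lambda>n. (\<Sum>t=1..n. (\<chi> i j. z (t + k) $ i * z t $ j)) /\<^sub>R real n) \<longlonglongrightarrow> 0"
    and B1c: "(\<lambda>n. (\<Sum>t=1..n. (\<chi> i j. z t $ i * z t $ j)) /\<^sub>R real n) \<longlonglongrightarrow> \<Sigma>z"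
    and B2: "\<exists>C>0. \<forall>t\<ge>1. \<bar>z t \<bullet> \<beta>0\<bar> < C"
    and B3: "(\<rho>0, \<beta>0, \<sigma>0) \<in> interior Theta"
  defines "X \<equiv> (\<lambda>t \<omega>. ARproc \<rho>0 \<beta>0 z (\<lambda>s. \<epsilon> s \<omega>) t)"
    and "h \<equiv> KLrate M (\<lambda>t \<omega>. ARproc \<rho>0 \<beta>0 z (\<lambda>s. \<epsilon> s \<omega>) t) z (\<rho>0, \<beta>0, \<sigma>0)"
  shows
    "(\<forall>\<theta>\<in>Theta.
        (\<lambda>n. (\<integral>\<omega>. - ln (Rn z (\<rho>0, \<beta>0, \<sigma>0) \<theta> n (\<lambda>t. X t \<omega>)) \<partial>M) / real n)
           \<longlonglongrightarrow> h \<theta>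
      \<and> (AE \<omega> in M. (\<lambda>n. ln (Rn z (\<rho>0, \<beta>0, \<sigma>0) \<theta> n (\<lambda>t. X t \<omega>)) / real n)
                      \<longlonglongrightarrow> - h \<theta>))
     \<and> (\<forall>K. compact K \<and> K \<subseteq> Theta \<longrightarrow>
        (AE \<omega> in M. uniform_limit K
            (\<lambda>n \<theta>. ln (Rn z (\<rho>0, \<beta>0, \<sigma>0) \<theta> n (\<lambda>t. X t \<omega>)) / real n)
            (\<lambda>\<theta>. - h \<theta>) sequentially))"
proof -
  \<comment> \<open>Only second moments of z enter ln R_n.\<close>
  obtain C where C: "\<And>t. t \<ge> 1 \<Longrightarrow> \<bar>z t \<bullet> \<beta>0\<bar> < C" using B2 by blast
  have \<sigma>0: "0 < \<sigma>0" using interior_subset[of Theta] B3 by (auto simp: Theta_def)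
  interpret ar_model M \<epsilon> \<sigma>0 \<rho>0 z \<beta>0 \<Sigma>z C
    by (rule ar_model.intro[OF stable_ar.intro[OF gaussian_noise.intro[OF P gaussian_noise_axioms.intro[OF
        iid_indep iid_normal \<sigma>0]] stable_ar_axioms.intro[OF rho0]] ar_model_axioms.intro[OF B1b B1c C]])
  have X: "(\<lambda>t. X t \<omega>) = (\<lambda>t. x t \<omega>)" for \<omega>
    by (simp add: X_def ARproc_x)
  have h: "h \<theta> = kl_rate \<theta>" if "\<theta> \<in> Theta" for \<theta>
    unfolding h_def KLrate_def X_def[symmetric] X using avg_expected_log_Rn[OF that] by (rule limI)
  have unif: "AE \<omega> in M. uniform_limit K (\<lambda>n \<theta>. ln (Rn z (\<rho>0, \<beta>0, \<sigma>0) \<theta> n (\<lambda>t. X t \<omega>)) / real n)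
      (\<lambda>\<theta>. - h \<theta>) sequentially" if K: "compact K" "K \<subseteq> Theta" for K
    using AE_typical
  proof eventually_elim
    case (elim \<omega>)
    have "- kl_rate \<theta> = - h \<theta>" if "\<theta> \<in> K" for \<theta> using h[of \<theta>] that K(2) by auto
    from uniform_limit_cong'[THEN iffD1, OF refl this uniform_limit_avg_log_Rn[OF elim K]]
    show ?case unfolding X .
  qed
  show ?thesis
  proof (intro conjI ballI allI impI)
    fix \<theta> :: "real \<times> (real^'m) \<times> real" assume \<theta>: "\<theta> \<in> Theta"
    show "(\<lambda>n. (\<integral>\<omega>. - ln (Rn z (\<rho>0, \<beta>0, \<sigma>0) \<theta> n (\<lambda>t. X t \<omega>)) \<partial>M) / real n) \<longlonglongrightarrow> h \<theta>"
      unfolding X h[OF \<theta>] by (rule avg_expected_log_Rn[OF \<theta>])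
    show "AE \<omega> in M. (\<lambda>n. ln (Rn z (\<rho>0, \<beta>0, \<sigma>0) \<theta> n (\<lambda>t. X t \<omega>)) / real n) \<longlonglongrightarrow> - h \<theta>"
      using unif[of "{\<theta>}"] \<theta> by (auto elim!: AE_mp dest: tendsto_uniform_limitI)
  qed (use unif in blast)
qed

end
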